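(* Let $\mathcal H$ be an infinite-dimensional complex Hilbert space and $\mathcal{SA}(\mathcal H)$ the set of all positive self-adjoint operators on $\mathcal H$. For $A,B\in\mathcal{SA}(\mathcal H)$ write $A=A_{s_1}$, $B=A_{s_2}$ with $s_1,s_2$ the closed positive forms associated with $A,B$, and define $A\,\dot\oplus\, B$ to be defined if and only if $s_1\oplus s_2$ is defined, in which case $A\,\dot\oplus\,B=A_{s_1+s_2}$ (the positive self-adjoint operator associated with the closed form $s_1+s_2$). Then $(\mathcal{SA}(\mathcal H);\dot\oplus,O)$ is a generalized effect algebra.
   Context: Bilinear forms $t$ on $\mathcal H$ are sesquilinear maps $D(t)\times D(t)\to\mathbb C$ on a dense linear subspace $D(t)$ (linear in the first argument); $t$ is positive if $t(x,x)\ge0$, bounded if $\sup\{t(x,x)\mid x\in D(t),\|x\|=1\}<\infty$. Sum $t+s$ has domain $D(t)\cap D(s)$. For positive forms, $t\oplus s$ is defined iff $t$ or $s$ is bounded or $D(t)=D(s)$, and then equals $t+s$ (bounded forms in the relevant class have domain $\mathcal H$). A positive form $t$ is closed if $D(t)$ is a Hilbert space under $(x,y)_t=t(x,y)+(1+m_t)(x,y)$, $m_t=\inf\{t(x,x)\mid x\in D(t),\|x\|=1\}$. Standard fact used for the definitions: for every closed positive densely defined form $t$ there is a unique positive self-adjoint operator $A_t$ with $D(A_t)\subseteq D(t)$ and $t(x,y)=(A_tx,y)$ for $x,y\in D(A_t)$ (the operator associated with $t$), and $t\mapsto A_t$ is a bijection between closed positive densely defined forms and positive self-adjoint operators. $O$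 is the zero operator. A generalized effect algebra is a structure $(E;\oplus,0)$ with a partial operation that is commutative and associative (when one side is defined), has $x\oplus0=x$, is cancellative, and satisfies $x\oplus y=0\Rightarrow x=y=0$. *)

theory Defs
  imports Complex_Main
begin

text \<open>A complex Hilbert space is modelled by a type 'h with addition, together with
  a complex scalar multiplication sc and an inner product ip (linear in the first
  argument), subject to the axioms below.\<close>

definition nrm :: "('h \<Rightarrow> 'h \<Rightarrow> complex) \<Rightarrow> 'h \<Rightarrow> real" where
  "nrm ip x = sqrt (Re (ip x x))"

definition complex_hilbert_space ::
  "(complex \<Rightarrow> 'h::ab_group_add \<Rightarrow> 'h) \<Rightarrow> ('h \<Rightarrow> 'h \<Rightarrow> complex) \<Rightarrow> bool" where
  "complex_hilbert_space sc ip \<longleftrightarrow>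
     (\<forall>a x y. sc a (x + y) = sc a x + sc a y) \<and>
     (\<forall>a b x. sc (a + b) x = sc a x + sc b x) \<and>
     (\<forall>a b x. sc (a * b) x = sc a (sc b x)) \<and>
     (\<forall>x. sc 1 x = x) \<and>
     (\<forall>x y z. ip (x + y) z = ip x z + ip y z) \<and>
     (\<forall>a x y. ip (sc a x) y = a * ip x y) \<and>
     (\<forall>x y. ip y x = cnj (ip x y)) \<and>
     (\<forall>x. Re (ip x x) \<ge> 0) \<and>
     (\<forall>x. ip x x = 0 \<longrightarrow> x = 0) \<and>
     (\<forall>X :: nat \<Rightarrow> 'h.
        (\<forall>e>0. \<exists>N. \<forall>m\<ge>N. \<forall>n\<ge>N. nrm ip (X m - X n) < e) \<longrightarrow>
        (\<exists>l. \<forall>e>0. \<exists>N. \<forall>n\<ge>N. nrm ip (X n - l) < e))"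

definition infinite_dimensional ::
  "(complex \<Rightarrow> 'h::ab_group_add \<Rightarrow> 'h) \<Rightarrow> bool" where
  "infinite_dimensional sc \<longleftrightarrow>
     (\<forall>F. finite F \<longrightarrow> (\<exists>x. \<forall>c. x \<noteq> (\<Sum>v\<in>F. sc (c v) v)))"

definition dense_subspace ::
  "(complex \<Rightarrow> 'h::ab_group_add \<Rightarrow> 'h) \<Rightarrow> ('h \<Rightarrow> 'h \<Rightarrow> complex) \<Rightarrow> 'h set \<Rightarrow> bool" where
  "dense_subspace sc ip D \<longleftrightarrow>
     0 \<in> D \<and> (\<forall>x\<in>D. \<forall>y\<in>D. x + y \<in> D) \<and> (\<forall>a. \<forall>x\<in>D. sc a x \<in> D) \<and>
     (\<forall>x. \<forall>e>0. \<exists>y\<in>D. nrm ip (x - y) < e)"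

text \<open>Forms: a pair (domain, sesquilinear map), normalised to be 0 off the domain.\<close>
type_synonym 'h form = "'h set \<times> ('h \<Rightarrow> 'h \<Rightarrow> complex)"

definition dd_form ::
  "(complex \<Rightarrow> 'h::ab_group_add \<Rightarrow> 'h) \<Rightarrow> ('h \<Rightarrow> 'h \<Rightarrow> complex) \<Rightarrow> 'h form \<Rightarrow> bool" where
  "dd_form sc ip T \<longleftrightarrow> (case T of (D, t) \<Rightarrow>
     dense_subspace sc ip D \<and>
     (\<forall>x\<in>D. \<forall>y\<in>D. \<forall>z\<in>D. t (x + y) z = t x z + t y z) \<and>
     (\<forall>a. \<forall>x\<in>D. \<forall>y\<in>D. t (sc a x) y = a * t x y) \<and>
     (\<forall>x\<in>D. \<forall>y\<in>D. \<forall>z\<in>D. t x (y + z) = t x y + t x z) \<and>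
     (\<forall>a. \<forall>x\<in>D. \<forall>y\<in>D. t x (sc a y) = cnj a * t x y) \<and>
     (\<forall>x y. x \<notin> D \<or> y \<notin> D \<longrightarrow> t x y = 0))"

definition positive_form :: "'h form \<Rightarrow> bool" where
  "positive_form T \<longleftrightarrow> (\<forall>x\<in>fst T. Im (snd T x x) = 0 \<and> Re (snd T x x) \<ge> 0)"

definition bounded_form :: "('h \<Rightarrow> 'h \<Rightarrow> complex) \<Rightarrow> 'h form \<Rightarrow> bool" where
  "bounded_form ip T \<longleftrightarrow> (\<exists>C. \<forall>x\<in>fst T. nrm ip x = 1 \<longrightarrow> Re (snd T x x) \<le> C)"

definition form_lb :: "('h \<Rightarrow> 'h \<Rightarrow> complex) \<Rightarrow> 'h form \<Rightarrow> real" where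
  "form_lb ip T = Inf {Re (snd T x x) | x. x \<in> fst T \<and> nrm ip x = 1}"

text \<open>Norm of the form inner product (x,y)_t = t(x,y) + (1 + m_t)(x,y).\<close>
definition form_norm :: "('h \<Rightarrow> 'h \<Rightarrow> complex) \<Rightarrow> 'h form \<Rightarrow> 'h \<Rightarrow> real" where
  "form_norm ip T x = sqrt (Re (snd T x x) + (1 + form_lb ip T) * Re (ip x x))"

definition closed_pos_form ::
  "(complex \<Rightarrow> 'h::ab_group_add \<Rightarrow> 'h) \<Rightarrow> ('h \<Rightarrow> 'h \<Rightarrow> complex) \<Rightarrow> 'h form \<Rightarrow> bool" where
  "closed_pos_form sc ip T \<longleftrightarrow> dd_form sc ip T \<and> positive_form T \<and>
     (\<forall>X :: nat \<Rightarrow> 'h. (\<forall>n. X n \<in> fst T) \<longrightarrow>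
        (\<forall>e>0. \<exists>N. \<forall>m\<ge>N. \<forall>n\<ge>N. form_norm ip T (X m - X n) < e) \<longrightarrow>
        (\<exists>l\<in>fst T. \<forall>e>0. \<exists>N. \<forall>n\<ge>N. form_norm ip T (X n - l) < e))"

definition form_sum :: "'h form \<Rightarrow> 'h form \<Rightarrow> 'h form" where
  "form_sum T S = (fst T \<inter> fst S,
     \<lambda>x y. if x \<in> fst T \<inter> fst S \<and> y \<in> fst T \<inter> fst S then snd T x y + snd S x y else 0)"

definition form_oplus_defined :: "('h \<Rightarrow> 'h \<Rightarrow> complex) \<Rightarrow> 'h form \<Rightarrow> 'h form \<Rightarrow> bool" where
  "form_oplus_defined ip T S \<longleftrightarrow> bounded_form ip T \<or> bounded_form ip S \<or> fst T = fst S"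

text \<open>Operators: a pair (domain, map), normalised to be 0 off the domain.\<close>
type_synonym 'h op = "'h set \<times> ('h \<Rightarrow> 'h)"

definition pos_sa_op ::
  "(complex \<Rightarrow> 'h::ab_group_add \<Rightarrow> 'h) \<Rightarrow> ('h \<Rightarrow> 'h \<Rightarrow> complex) \<Rightarrow> 'h op \<Rightarrow> bool" where
  "pos_sa_op sc ip A \<longleftrightarrow> (case A of (D, f) \<Rightarrow>
     dense_subspace sc ip D \<and>
     (\<forall>x\<in>D. \<forall>y\<in>D. f (x + y) = f x + f y) \<and>
     (\<forall>a. \<forall>x\<in>D. f (sc a x) = sc a (f x)) \<and>
     (\<forall>x. x \<notin> D \<longrightarrow> f x = 0) \<and>
     \<comment> \<open>self-adjoint: D(A*) = D(A) and A* = A\<close>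
     {y. \<exists>z. \<forall>x\<in>D. ip (f x) y = ip x z} = D \<and>
     (\<forall>x\<in>D. \<forall>y\<in>D. ip (f x) y = ip x (f y)) \<and>
     \<comment> \<open>positive\<close>
     (\<forall>x\<in>D. Re (ip (f x) x) \<ge> 0))"

definition zero_op :: "'h::ab_group_add op" where
  "zero_op = (UNIV, \<lambda>_. 0)"

text \<open>The operator associated with a closed positive form (first representation theorem).\<close>
definition assoc_op ::
  "(complex \<Rightarrow> 'h::ab_group_add \<Rightarrow> 'h) \<Rightarrow> ('h \<Rightarrow> 'h \<Rightarrow> complex) \<Rightarrow> 'h form \<Rightarrow> 'h op" where
  "assoc_op sc ip T = (THE A. pos_sa_op sc ip A \<and> fst A \<subseteq> fst T \<and>
      (\<forall>x\<in>fst A. \<forall>y\<in>fst T. snd T x y = ip (snd A x) y))"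

definition form_of ::
  "(complex \<Rightarrow> 'h::ab_group_add \<Rightarrow> 'h) \<Rightarrow> ('h \<Rightarrow> 'h \<Rightarrow> complex) \<Rightarrow> 'h op \<Rightarrow> 'h form" where
  "form_of sc ip A = (THE T. closed_pos_form sc ip T \<and> assoc_op sc ip T = A)"

definition SA :: "(complex \<Rightarrow> 'h::ab_group_add \<Rightarrow> 'h) \<Rightarrow> ('h \<Rightarrow> 'h \<Rightarrow> complex) \<Rightarrow> 'h op set" where
  "SA sc ip = {A. pos_sa_op sc ip A}"

definition sa_oplus ::
  "(complex \<Rightarrow> 'h::ab_group_add \<Rightarrow> 'h) \<Rightarrow> ('h \<Rightarrow> 'h \<Rightarrow> complex) \<Rightarrow> 'h op \<Rightarrow> 'h op \<Rightarrow> 'h op option" where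
  "sa_oplus sc ip A B =
     (if form_oplus_defined ip (form_of sc ip A) (form_of sc ip B)
      then Some (assoc_op sc ip (form_sum (form_of sc ip A) (form_of sc ip B)))
      else None)"

text \<open>Generalized effect algebra on a carrier E with partial operation (as option).\<close>
definition gen_effect_algebra :: "'a set \<Rightarrow> ('a \<Rightarrow> 'a \<Rightarrow> 'a option) \<Rightarrow> 'a \<Rightarrow> bool" where
  "gen_effect_algebra E opl z \<longleftrightarrow>
     z \<in> E \<and>
     (\<forall>x\<in>E. \<forall>y\<in>E. \<forall>w. opl x y = Some w \<longrightarrow> w \<in> E) \<and>
     (\<forall>x\<in>E. \<forall>y\<in>E. opl x y = opl y x) \<and>
     (\<forall>x\<in>E. \<forall>y\<in>E. \<forall>u\<in>E.
        Option.bind (opl x y) (\<lambda>v. opl v u) = Option.bind (opl y u) (\<lambda>v. opl x v)) \<and>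
     (\<forall>x\<in>E. opl x z = Some x) \<and>
     (\<forall>x\<in>E. \<forall>y\<in>E. \<forall>w\<in>E. opl x y \<noteq> None \<and> opl x y = opl x w \<longrightarrow> y = w) \<and>
     (\<forall>x\<in>E. \<forall>y\<in>E. opl x y = Some z \<longrightarrow> x = z \<and> y = z)"

end

theory Submission
  imports Defs
begin

text \<open>
  The map \<open>t \<mapsto> A\<^sub>t\<close> is a bijection between closed positive forms and positive
  self-adjoint operators, so it suffices to check the axioms for closed forms under \<open>\<oplus>\<close>.
  Existence of \<open>A\<^sub>t\<close> comes from the Riesz representation theorem in the Hilbert space
  \<open>(D(t), (\<cdot>,\<cdot>)\<^sub>t)\<close>, which yields \<open>(A\<^sub>t + 1 + m\<^sub>t)\<^sup>-\<^sup>1\<close>; uniqueness and injectivity follow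
  because \<open>D(A\<^sub>t)\<close> is dense in \<open>D(t)\<close> for the form norm. Surjectivity: every \<open>A\<close> is
  associated with the closure of the form \<open>(Ax, y)\<close>, which exists because that form is
  closable.

  If \<open>t \<oplus> s\<close> is defined then \<open>D(t) \<inter> D(s)\<close> is dense, since a bounded closed form is
  defined everywhere, and \<open>t + s\<close> is closed because its form norm is equivalent to the
  sum of the two form norms. Commutativity is clear, associativity and cancellation
  reduce to a case analysis on boundedness and domains (two bounded closed forms agreeing
  on a dense set coincide), and \<open>t + s = 0\<close> forces \<open>t = s = 0\<close> by positivity and
  polarization.
\<close>

section \<open>Real numbers and sequences\<close>

lemma tendsto_zero_if_norm_le:
  fixes f :: "nat \<Rightarrow> 'a::real_normed_vector"
  assumes "\<And>n. norm (f n) \<le> g n" "g \<longlonglongrightarrow> 0"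
  shows "f \<longlonglongrightarrow> 0"
proof -
  have "(\<lambda>n. norm (f n)) \<longlonglongrightarrow> 0"
    by (rule real_tendsto_sandwich[of "\<lambda>n. 0" _ _ g]) (use assms in auto)
  then show ?thesis by (rule tendsto_norm_zero_cancel)
qed

lemma LIMSEQ_zero_D:
  "(f::nat\<Rightarrow>real) \<longlonglongrightarrow> 0 \<Longrightarrow> e > 0 \<Longrightarrow> \<exists>N. \<forall>n\<ge>N. \<bar>f n\<bar> < e"
  unfolding LIMSEQ_iff by simp

lemma tendsto_zero_sandwich:
  fixes f g :: "nat \<Rightarrow> real"
  assumes "\<And>n. 0 \<le> f n" "\<And>n. f n \<le> g n" "g \<longlonglongrightarrow> 0"
  shows "f \<longlonglongrightarrow> 0"
  by (rule real_tendsto_sandwich[of "\<lambda>n. 0" f sequentially g]) (use assms in auto)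

lemma le_if_le_sqrt_mult:
  fixes a b :: real
  assumes "0 \<le> a" "0 \<le> b" "a \<le> sqrt a * sqrt b" shows "a \<le> b"
proof (cases "a = 0")
  case False
  have "sqrt a * sqrt a \<le> sqrt a * sqrt b" using assms by simp
  moreover have "sqrt a > 0" using assms False by simp
  ultimately have "sqrt a \<le> sqrt b" using mult_le_cancel_left_pos by blast
  then show ?thesis by simp
qed (use assms in simp)

lemma sqrt_less_iff_less_square:
  "0 \<le> a \<Longrightarrow> 0 < e \<Longrightarrow> sqrt a < e \<longleftrightarrow> a < e\<^sup>2"
  by (metis real_sqrt_less_iff abs_of_pos real_sqrt_abs)

lemma all_pos_square_iff:
  "(\<forall>e>0. P (e\<^sup>2)) \<longleftrightarrow> (\<forall>e::real>0. P e)"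
  by (metis real_sqrt_gt_zero real_sqrt_pow2 less_eq_real_def zero_less_power2 not_less)

lemma one_over_Suc_tendsto_zero: "(\<lambda>n. 1 / (real n + 1)) \<longlonglongrightarrow> 0"
proof -
  have "(\<lambda>n. inverse (real (Suc n))) \<longlonglongrightarrow> 0" by (rule LIMSEQ_inverse_real_of_nat)
  moreover have "(\<lambda>n. inverse (real (Suc n))) = (\<lambda>n. 1 / (real n + 1))"
    by (simp add: inverse_eq_divide add.commute)
  ultimately show ?thesis by simp
qed

lemma summand_le_scaled_sum:
  fixes a b h k k' :: real
  assumes "0 \<le> a" "0 \<le> b" "0 \<le> h" "1 \<le> k" "1 \<le> k'"
  shows "a + k * h \<le> k * (a + b + k' * h)"
proof -
  have "a \<le> k * a" "0 \<le> k * b" "k * h \<le> k * (k' * h)"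
    using assms by (auto intro: mult_left_mono simp: mult_le_cancel_right1 mult_le_cancel_left1)
  then show ?thesis by (simp add: algebra_simps)
qed

section \<open>Hilbert spaces and inner product subspaces\<close>

locale complex_hilbert =
  fixes sc :: "complex \<Rightarrow> 'h::ab_group_add \<Rightarrow> 'h" and ip :: "'h \<Rightarrow> 'h \<Rightarrow> complex"
  assumes hilbert: "complex_hilbert_space sc ip"
    \<comment> \<open>all that is used of infinite dimensionality: it makes \<open>form_lb\<close> an infimum
       over a nonempty set\<close>
    and nontriv: "\<exists>x::'h. x \<noteq> 0"
begin

lemma sc_add: "sc a (x + y) = sc a x + sc a y"
  using hilbert unfolding complex_hilbert_space_def by (elim conjE) fast
lemma sc_add_left: "sc (a + b) x = sc a x + sc b x"
  using hilbert unfolding complex_hilbert_space_def by (elim conjE) fast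
lemma sc_mult: "sc (a * b) x = sc a (sc b x)"
  using hilbert unfolding complex_hilbert_space_def by (elim conjE) fast
lemma sc_one[simp]: "sc 1 x = x"
  using hilbert unfolding complex_hilbert_space_def by (elim conjE) fast
lemma ip_add: "ip (x + y) z = ip x z + ip y z"
  using hilbert unfolding complex_hilbert_space_def by (elim conjE) fast
lemma ip_sc: "ip (sc a x) y = a * ip x y"
  using hilbert unfolding complex_hilbert_space_def by (elim conjE) fast
lemma ip_cnj: "ip y x = cnj (ip x y)"
  using hilbert unfolding complex_hilbert_space_def by (elim conjE) fast
lemma ip_pos: "Re (ip x x) \<ge> 0"
  using hilbert unfolding complex_hilbert_space_def by (elim conjE) fast
lemma ip_self_eq_zero: "ip x x = 0 \<Longrightarrow> x = 0"
  using hilbert unfolding complex_hilbert_space_def by (elim conjE) fast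

lemma nrm_cauchy_convergent:
  fixes X :: "nat \<Rightarrow> 'h"
  assumes "\<forall>e>0. \<exists>N. \<forall>m\<ge>N. \<forall>n\<ge>N. nrm ip (X m - X n) < e"
  shows "\<exists>l. \<forall>e>0. \<exists>N. \<forall>n\<ge>N. nrm ip (X n - l) < e"
  using hilbert assms unfolding complex_hilbert_space_def by blast

lemma sc_zero_left[simp]: "sc 0 x = 0"
  using sc_add_left[of 0 0 x] by simp
lemma sc_zero[simp]: "sc a 0 = 0"
  using sc_add[of a 0 0] by simp
lemma sc_minus: "sc a (- x) = - sc a x"
proof -
  have "sc a x + sc a (- x) = 0" using sc_add[of a x "-x"] by simp
  then show ?thesis by (metis minus_unique)
qed
lemma sc_minus_left: "sc (- a) x = - sc a x"
proof -
  have "sc a x + sc (- a) x = 0" using sc_add_left[of a "-a" x] by simp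
  then show ?thesis by (metis minus_unique)
qed
lemma sc_diff: "sc a (x - y) = sc a x - sc a y"
  by (simp only: diff_conv_add_uminus sc_add sc_minus)
lemma sc_m1: "sc (-1) x = - x" by (simp add: sc_minus_left)
lemma sc_two: "sc 2 x = x + x"
  using sc_add_left[of 1 1 x] by simp
lemma sc_half2: "sc 2 (sc (1/2) y) = y"
  using sc_mult[of 2 "1/2" y] by simp

end

text \<open>A subspace \<open>V\<close> carrying a second inner product \<open>q\<close>; instantiated with \<open>\<H>\<close> itself,
  with form domains and form inner products, and with operator domains and graph inner
  products.\<close>

locale inner_product_subspace = complex_hilbert +
  fixes V :: "'h::ab_group_add set" and q :: "'h \<Rightarrow> 'h \<Rightarrow> complex"
  assumes V0: "0 \<in> V" and Vadd: "x \<in> V \<Longrightarrow> y \<in> V \<Longrightarrow> x + y \<in> V"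
    and Vsc: "x \<in> V \<Longrightarrow> sc a x \<in> V"
    and q_add: "x \<in> V \<Longrightarrow> y \<in> V \<Longrightarrow> z \<in> V \<Longrightarrow> q (x + y) z = q x z + q y z"
    and q_sc: "x \<in> V \<Longrightarrow> y \<in> V \<Longrightarrow> q (sc a x) y = a * q x y"
    and q_herm: "x \<in> V \<Longrightarrow> y \<in> V \<Longrightarrow> q y x = cnj (q x y)"
    and q_pos: "x \<in> V \<Longrightarrow> 0 \<le> Re (q x x)"
    and q_self_eq_zero: "x \<in> V \<Longrightarrow> q x x = 0 \<Longrightarrow> x = 0"
begin

lemma Vminus: "x \<in> V \<Longrightarrow> - x \<in> V"
  using Vsc[of x "-1"] by (simp add: sc_m1)
lemma Vdiff: "x \<in> V \<Longrightarrow> y \<in> V \<Longrightarrow> x - y \<in> V"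
  unfolding diff_conv_add_uminus by (intro Vadd Vminus)

lemma q_add_right:
  "x \<in> V \<Longrightarrow> y \<in> V \<Longrightarrow> z \<in> V \<Longrightarrow> q x (y + z) = q x y + q x z"
  by (metis Vadd complex_cnj_add q_add q_herm)
lemma q_sc_right:
  "x \<in> V \<Longrightarrow> y \<in> V \<Longrightarrow> q x (sc a y) = cnj a * q x y"
  by (metis Vsc complex_cnj_cnj complex_cnj_mult q_herm q_sc)
lemma q_zero_left[simp]: "y \<in> V \<Longrightarrow> q 0 y = 0"
  using q_sc[of 0 y 0] V0 by simp
lemma q_zero_right[simp]: "x \<in> V \<Longrightarrow> q x 0 = 0"
  using q_sc_right[of x 0 0] V0 by simp
lemma q_minus_left: "x \<in> V \<Longrightarrow> y \<in> V \<Longrightarrow> q (- x) y = - q x y"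
  using q_sc[of x y "-1"] by (simp add: sc_m1)
lemma q_minus_right: "x \<in> V \<Longrightarrow> y \<in> V \<Longrightarrow> q x (- y) = - q x y"
  using q_sc_right[of x y "-1"] by (simp add: sc_m1)
lemma q_diff_left:
  "x \<in> V \<Longrightarrow> y \<in> V \<Longrightarrow> z \<in> V \<Longrightarrow> q (x - y) z = q x z - q y z"
  using q_add[of x "-y" z] q_minus_left[of y z] Vminus[of y] by simp
lemma q_diff_right:
  "x \<in> V \<Longrightarrow> y \<in> V \<Longrightarrow> z \<in> V \<Longrightarrow> q x (y - z) = q x y - q x z"
  using q_add_right[of x y "-z"] q_minus_right[of x z] Vminus[of z] by simp

definition Q :: "'h \<Rightarrow> real" where "Q x = Re (q x x)"

lemma Q_nonneg: "x \<in> V \<Longrightarrow> 0 \<le> Q x" by (simp add: Q_def q_pos)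
lemma q_real: "x \<in> V \<Longrightarrow> q x x = complex_of_real (Q x)"
proof -
  assume "x \<in> V"
  then have "q x x = cnj (q x x)" using q_herm by blast
  then have "Im (q x x) = 0" by (metis cnj.sel(2) equal_neg_zero)
  then show ?thesis unfolding Q_def by (simp add: complex_eq_iff)
qed
lemma Q_eq0: "x \<in> V \<Longrightarrow> Q x = 0 \<longleftrightarrow> x = 0"
  using q_real q_self_eq_zero by (metis V0 Q_def q_zero_left of_real_0 zero_complex.sel(1))
lemma Q_zero[simp]: "Q 0 = 0" using Q_eq0 V0 by blast

lemma Q_add_sc: assumes "x \<in> V" "y \<in> V"
  shows "Q (x + sc m y) = Q x + (cmod m)^2 * Q y + 2 * Re (cnj m * q x y)"
proof -
  have sy: "sc m y \<in> V" using assms Vsc by auto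
  have xy: "x + sc m y \<in> V" using assms sy Vadd by blast
  have "q (x + sc m y) (x + sc m y) = q x (x + sc m y) + q (sc m y) (x + sc m y)"
    using q_add[OF assms(1) sy xy] .
  also have "q x (x + sc m y) = q x x + cnj m * q x y"
    using q_add_right[OF assms(1) assms(1) sy] q_sc_right[OF assms] by simp
  also have "q (sc m y) (x + sc m y) = m * (q y x + cnj m * q y y)"
    using q_sc[OF assms(2) xy] q_add_right[OF assms(2) assms(1) sy] q_sc_right[OF assms(2) assms(2)] by simp
  finally have "q (x + sc m y) (x + sc m y) = q x x + cnj m * q x y + m * q y x + m * cnj m * q y y"
    by (simp add: algebra_simps)
  moreover have "Re (m * q y x) = Re (cnj m * q x y)"
    using q_herm[OF assms] by (metis complex_cnj_cnj complex_cnj_mult cnj.sel(1))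
  moreover have "m * cnj m = complex_of_real ((cmod m)^2)"
    by (rule complex_norm_square[symmetric])
  ultimately have "Q (x + sc m y) = Re (q x x) + Re (cnj m * q x y) + Re (cnj m * q x y) + Re (complex_of_real ((cmod m)^2) * q y y)"
    unfolding Q_def by (simp add: mult.assoc)
  also have "Re (complex_of_real ((cmod m)^2) * q y y) = (cmod m)^2 * Q y"
    unfolding Q_def by simp
  finally show ?thesis unfolding Q_def by simp
qed

lemma Q_add: assumes "x \<in> V" "y \<in> V"
  shows "Q (x + y) = Q x + Q y + 2 * Re (q x y)"
  using Q_add_sc[OF assms, of 1] by simp

lemma Q_sc: assumes "x \<in> V" shows "Q (sc m x) = (cmod m)^2 * Q x"
  using Q_add_sc[OF V0 assms, of m] V0 assms by simp

lemma Q_minus: "x \<in> V \<Longrightarrow> Q (- x) = Q x"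
  using Q_sc[of x "-1"] by (simp add: sc_m1)

lemma Q_diff: assumes "x \<in> V" "y \<in> V"
  shows "Q (x - y) = Q x + Q y - 2 * Re (q x y)"
  using Q_add[OF assms(1) Vminus[OF assms(2)]] assms
  by (simp add: Q_minus q_minus_right)

lemma Q_parallelogram: assumes "x \<in> V" "y \<in> V"
  shows "Q (x + y) + Q (x - y) = 2 * Q x + 2 * Q y"
  using Q_add[OF assms] Q_diff[OF assms] by simp

lemma Q_add_le: assumes "x \<in> V" "y \<in> V"
  shows "Q (x + y) \<le> 2 * Q x + 2 * Q y"
  using Q_parallelogram[OF assms] Q_nonneg[OF Vdiff[OF assms]] by simp

lemma Q_diff_le: assumes "x \<in> V" "y \<in> V"
  shows "Q (x - y) \<le> 2 * Q x + 2 * Q y"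
  using Q_add_le[OF assms(1) Vminus[OF assms(2)]] assms by (simp add: Q_minus)

lemma Q_sub_real_multiple:
  assumes "x \<in> V" "y \<in> V"
  shows "Q (x + sc (- (of_real s * q x y)) y) = Q x + s\<^sup>2 * (cmod (q x y))\<^sup>2 * Q y - 2 * s * (cmod (q x y))\<^sup>2"
proof -
  have cc: "complex_of_real ((cmod (q x y))\<^sup>2) = q x y * cnj (q x y)" by (rule complex_norm_square)
  have "cnj (- (of_real s * q x y)) * q x y = - of_real s * of_real ((cmod (q x y))\<^sup>2)"
    by (simp only: cc) (simp add: algebra_simps)
  then have "Re (cnj (- (of_real s * q x y)) * q x y) = - s * (cmod (q x y))\<^sup>2"
    by (simp only: Re_complex_of_real times_complex.sel minus_complex.sel uminus_complex.sel) simp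
  moreover have "(cmod (of_real s * q x y))\<^sup>2 = s\<^sup>2 * (cmod (q x y))\<^sup>2"
    by (simp add: norm_mult power_mult_distrib)
  ultimately show ?thesis using Q_add_sc[OF assms, of "- (of_real s * q x y)"] by simp
qed

lemma cauchy_schwarz_sq: assumes "x \<in> V" "y \<in> V"
  shows "(cmod (q x y))\<^sup>2 \<le> Q x * Q y"
proof -
  define c where "c = (cmod (q x y))\<^sup>2"
  have key: "0 \<le> Q x + s\<^sup>2 * c * Q y - 2 * s * c" for s :: real
    using Q_sub_real_multiple[OF assms, of s] Q_nonneg assms Vadd Vsc unfolding c_def by metis
  show ?thesis
  proof (cases "Q y = 0")
    case True
    \<comment> \<open>otherwise \<open>s = (Q x + 1) / (2 c)\<close> violates \<open>key\<close>\<close>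
    have "c = 0"
    proof (rule ccontr)
      assume "c \<noteq> 0"
      then have "Q x - 2 * ((Q x + 1) / (2 * c)) * c = -1" by (simp add: field_simps)
      then show False using key[of "(Q x + 1) / (2 * c)"] True by simp
    qed
    then show ?thesis using True c_def by simp
  next
    case False
    then have yp: "Q y > 0" using Q_nonneg[OF assms(2)] by simp
    have "0 \<le> Q x + (1 / Q y)\<^sup>2 * c * Q y - 2 * (1 / Q y) * c" by (rule key)
    also have "\<dots> = Q x - c / Q y" using yp by (simp add: field_simps power2_eq_square)
    finally show ?thesis using yp c_def by (simp add: divide_le_eq mult.commute)
  qed
qed

lemma cauchy_schwarz: assumes "x \<in> V" "y \<in> V"
  shows "cmod (q x y) \<le> sqrt (Q x) * sqrt (Q y)"
  using cauchy_schwarz_sq[OF assms] by (metis norm_ge_zero real_sqrt_le_mono real_sqrt_mult real_sqrt_pow2_iff power2_eq_square real_sqrt_abs abs_norm_cancel)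

definition cauchy :: "(nat \<Rightarrow> 'h) \<Rightarrow> bool" where
  "cauchy X \<longleftrightarrow> (\<forall>n. X n \<in> V) \<and> (\<forall>e>0. \<exists>N. \<forall>m\<ge>N. \<forall>n\<ge>N. Q (X m - X n) < e)"
definition conv :: "(nat \<Rightarrow> 'h) \<Rightarrow> 'h \<Rightarrow> bool" where
  "conv X l \<longleftrightarrow> (\<forall>n. X n \<in> V) \<and> l \<in> V \<and> (\<lambda>n. Q (X n - l)) \<longlonglongrightarrow> 0"

lemma conv_in: "conv X l \<Longrightarrow> X n \<in> V" "conv X l \<Longrightarrow> l \<in> V"
  unfolding conv_def by auto

lemma conv_const: "l \<in> V \<Longrightarrow> conv (\<lambda>n. l) l"
  unfolding conv_def by simp

lemma conv_if_dominated:
  assumes "\<And>n. X n \<in> V" "l \<in> V" "\<And>n. Q (X n - l) \<le> g n" "g \<longlonglongrightarrow> 0"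
  shows "conv X l"
  unfolding conv_def using assms(1,2) by (auto intro!: tendsto_zero_sandwich[OF _ assms(3,4)] Q_nonneg Vdiff)

lemma cauchy_if_le_null:
  assumes X: "\<And>n. X n \<in> V" and le: "\<And>m n. Q (X m - X n) \<le> f m + f n" and f: "f \<longlonglongrightarrow> 0"
  shows "cauchy X"
  unfolding cauchy_def
proof (intro conjI allI impI)
  fix e :: real assume "e > 0"
  then obtain N where N: "\<And>n. n \<ge> N \<Longrightarrow> \<bar>f n\<bar> < e / 2" using LIMSEQ_zero_D[OF f, of "e / 2"]
    by auto
  have "Q (X m - X n) < e" if "m \<ge> N" "n \<ge> N" for m n
    using le[of m n] N[OF that(1)] N[OF that(2)] by linarith
  then show "\<exists>N. \<forall>m\<ge>N. \<forall>n\<ge>N. Q (X m - X n) < e" by blast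
qed (rule X)

lemma cauchy_if_dominated:
  assumes X: "\<And>n. X n \<in> V" and c: "c > 0" and le: "\<And>m n. Q (X m - X n) \<le> c * P (X m - X n)"
    and P: "\<And>e. e > 0 \<Longrightarrow> \<exists>N. \<forall>m\<ge>N. \<forall>n\<ge>N. P (X m - X n) < e"
  shows "cauchy X"
  unfolding cauchy_def
proof (intro conjI allI impI)
  fix e :: real assume "e > 0"
  then obtain N where N: "\<And>m n. m \<ge> N \<Longrightarrow> n \<ge> N \<Longrightarrow> P (X m - X n) < e / c"
    using P[of "e / c"] c by auto
  have "Q (X m - X n) < e" if "m \<ge> N" "n \<ge> N" for m n
  proof -
    have "Q (X m - X n) \<le> c * P (X m - X n)" by (rule le)
    also have "\<dots> < c * (e / c)" by (rule mult_strict_left_mono[OF N[OF that] c])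
    finally show ?thesis using c by simp
  qed
  then show "\<exists>N. \<forall>m\<ge>N. \<forall>n\<ge>N. Q (X m - X n) < e" by blast
qed (rule X)

lemma conv_add: assumes "conv X l" "conv Y m" shows "conv (\<lambda>n. X n + Y n) (l + m)"
proof (rule conv_if_dominated)
  have in1: "\<And>n. X n \<in> V" "l \<in> V" "\<And>n. Y n \<in> V" "m \<in> V" using assms unfolding conv_def by auto
  then show "X n + Y n \<in> V" "l + m \<in> V" for n by (auto intro: Vadd)
  have "(X n + Y n) - (l + m) = (X n - l) + (Y n - m)" for n by simp
  then show "Q ((X n + Y n) - (l + m)) \<le> 2 * Q (X n - l) + 2 * Q (Y n - m)" for n
    using Q_add_le in1 Vdiff by metis
  show "(\<lambda>n. 2 * Q (X n - l) + 2 * Q (Y n - m)) \<longlonglongrightarrow> 0"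
    using assms tendsto_add[OF tendsto_mult_right_zero tendsto_mult_right_zero] unfolding conv_def by fastforce
qed

lemma conv_sc: assumes "conv X l" shows "conv (\<lambda>n. sc a (X n)) (sc a l)"
proof -
  have in1: "\<And>n. X n \<in> V" "l \<in> V" using assms unfolding conv_def by auto
  have eq: "Q (sc a (X n) - sc a l) = (cmod a)^2 * Q (X n - l)" for n
    by (simp add: sc_diff[symmetric] Q_sc Vdiff in1)
  have "(\<lambda>n. (cmod a)^2 * Q (X n - l)) \<longlonglongrightarrow> (cmod a)^2 * 0"
    using assms unfolding conv_def by (intro tendsto_intros) auto
  then show ?thesis using in1 Vsc unfolding conv_def eq by auto
qed

lemma conv_diff: assumes "conv X l" "conv Y m" shows "conv (\<lambda>n. X n - Y n) (l - m)"
proof -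
  have "conv (\<lambda>n. X n + sc (-1) (Y n)) (l + sc (-1) m)"
    by (rule conv_add[OF assms(1) conv_sc[OF assms(2)]])
  then show ?thesis by (simp add: sc_m1)
qed

lemma conv_cauchy: assumes "conv X l" shows "cauchy X"
proof (rule cauchy_if_le_null)
  have in1: "\<And>n. X n \<in> V" "l \<in> V" using assms unfolding conv_def by auto
  then show "X n \<in> V" for n by blast
  have "X m - X n = (X m - l) - (X n - l)" for m n by (simp add: algebra_simps)
  then show "Q (X m - X n) \<le> 2 * Q (X m - l) + 2 * Q (X n - l)" for m n
    using Q_diff_le in1 Vdiff by metis
  show "(\<lambda>n. 2 * Q (X n - l)) \<longlonglongrightarrow> 0"
    using assms tendsto_mult_right_zero unfolding conv_def by blast
qed

lemma conv_unique: assumes "conv X l" "conv X m" shows "l = m"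
proof -
  have in1: "\<And>n. X n \<in> V" "l \<in> V" "m \<in> V" using assms unfolding conv_def by auto
  have le: "Q (l - m) \<le> 2 * Q (X n - l) + 2 * Q (X n - m)" for n
  proof -
    have "l - m = (X n - m) - (X n - l)" by (simp add: algebra_simps)
    then show ?thesis using Q_diff_le[of "X n - m" "X n - l"] in1 Vdiff by auto
  qed
  have "(\<lambda>n. 2 * Q (X n - l) + 2 * Q (X n - m)) \<longlonglongrightarrow> 2 * 0 + 2 * 0"
    using assms unfolding conv_def by (intro tendsto_intros) auto
  then have "Q (l - m) \<le> 2 * 0 + 2 * 0"
    by (rule LIMSEQ_le_const) (use le in auto)
  then have "Q (l - m) = 0" using Q_nonneg[of "l - m"] Vdiff in1 by auto
  then show ?thesis using Q_eq0[of "l - m"] Vdiff in1 by auto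
qed

lemma q_tendsto_zero: assumes "\<And>n. A n \<in> V" "\<And>n. B n \<in> V" "(\<lambda>n. Q (A n)) \<longlonglongrightarrow> 0" "(\<lambda>n. Q (B n)) \<longlonglongrightarrow> b"
  shows "(\<lambda>n. q (A n) (B n)) \<longlonglongrightarrow> 0"
proof (rule tendsto_zero_if_norm_le)
  show "norm (q (A n) (B n)) \<le> sqrt (Q (A n)) * sqrt (Q (B n))" for n
    using cauchy_schwarz assms by auto
  have "(\<lambda>n. sqrt (Q (A n)) * sqrt (Q (B n))) \<longlonglongrightarrow> sqrt 0 * sqrt b"
    using assms by (intro tendsto_intros) auto
  then show "(\<lambda>n. sqrt (Q (A n)) * sqrt (Q (B n))) \<longlonglongrightarrow> 0" by simp
qed

lemma conv_q_tendsto: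
  assumes "conv X l" "conv Y m"
  shows "(\<lambda>n. q (X n) (Y n)) \<longlonglongrightarrow> q l m"
proof -
  have in1: "\<And>n. X n \<in> V" "l \<in> V" "\<And>n. Y n \<in> V" "m \<in> V" using assms unfolding conv_def by auto
  have lx: "(\<lambda>n. Q (X n - l)) \<longlonglongrightarrow> 0" and ly: "(\<lambda>n. Q (Y n - m)) \<longlonglongrightarrow> 0"
    using assms unfolding conv_def by auto
  have dec: "q (X n) (Y n) = q (X n - l) (Y n - m) + q (X n - l) m + cnj (q (Y n - m) l) + q l m" for n
  proof -
    define a where "a = X n - l"
    define b where "b = Y n - m"
    have a: "a \<in> V" "b \<in> V" using in1 Vdiff a_def b_def by auto
    have xa: "X n = a + l" "Y n = b + m" using a_def b_def by simp_all
    have "q (X n) (Y n) = q (a + l) (b + m)" by (simp only: xa)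
    also have "\<dots> = q a (b + m) + q l (b + m)" using q_add[of a l "b + m"] a in1 Vadd by blast
    also have "\<dots> = q a b + q a m + (q l b + q l m)"
      using q_add_right[of a b m] q_add_right[of l b m] a in1 by simp
    also have "q l b = cnj (q b l)" using q_herm[of b l] a in1 by blast
    finally show ?thesis unfolding a_def b_def by simp
  qed
  have t1: "(\<lambda>n. q (X n - l) (Y n - m)) \<longlonglongrightarrow> 0"
    by (rule q_tendsto_zero[OF _ _ lx ly]) (use in1 Vdiff in auto)
  have t2: "(\<lambda>n. q (X n - l) m) \<longlonglongrightarrow> 0"
    by (rule q_tendsto_zero[OF _ _ lx tendsto_const]) (use in1 Vdiff in auto)
  have t3: "(\<lambda>n. q (Y n - m) l) \<longlonglongrightarrow> 0"
    by (rule q_tendsto_zero[OF _ _ ly tendsto_const]) (use in1 Vdiff in auto)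
  have "(\<lambda>n. q (X n - l) (Y n - m) + q (X n - l) m + cnj (q (Y n - m) l) + q l m) \<longlonglongrightarrow> 0 + 0 + cnj 0 + q l m"
    by (intro tendsto_intros t1 t2 t3)
  then show ?thesis unfolding dec by simp
qed

lemma conv_Q_tendsto: assumes "conv X l" shows "(\<lambda>n. Q (X n)) \<longlonglongrightarrow> Q l"
  unfolding Q_def by (intro tendsto_intros conv_q_tendsto assms)

lemma cauchy_D:
  assumes "cauchy X" "e > 0"
  shows "\<exists>N. \<forall>m\<ge>N. \<forall>n\<ge>N. Q (X m - X n) < e"
  using assms unfolding cauchy_def by auto

lemma cauchy_iff_sqrt:
  assumes "\<And>n. X n \<in> V"
  shows "cauchy X \<longleftrightarrow> (\<forall>e>0. \<exists>N. \<forall>m\<ge>N. \<forall>n\<ge>N. sqrt (Q (X m - X n)) < e)"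
  using all_pos_square_iff[of "\<lambda>e. \<exists>N. \<forall>m\<ge>N. \<forall>n\<ge>N. Q (X m - X n) < e"] assms
  by (simp add: cauchy_def sqrt_less_iff_less_square Q_nonneg Vdiff)

lemma conv_iff_sqrt:
  assumes "\<And>n. X n \<in> V" "l \<in> V"
  shows "conv X l \<longleftrightarrow> (\<forall>e>0. \<exists>N. \<forall>n\<ge>N. sqrt (Q (X n - l)) < e)"
  using all_pos_square_iff[of "\<lambda>e. \<exists>N. \<forall>n\<ge>N. Q (X n - l) < e"] assms
  by (simp add: conv_def LIMSEQ_iff sqrt_less_iff_less_square Q_nonneg Vdiff)

lemma parallelogram_min_bound:
  assumes x: "x \<in> V" and s: "s \<in> V" and t: "t \<in> V" and D: "D \<le> Q (x - sc (1/2) (s + t))"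
  shows "Q (t - s) \<le> 2 * Q (x - s) + 2 * Q (x - t) - 4 * D"
proof -
  have m: "sc (1/2) (s + t) \<in> V" using s t Vadd Vsc by blast
  have "sc 2 (x - sc (1/2) (s + t)) = (x + x) - (s + t)"
    by (simp only: sc_diff sc_half2) (simp only: sc_two)
  then have "(x - s) + (x - t) = sc 2 (x - sc (1/2) (s + t))" by (simp add: algebra_simps)
  then have "Q ((x - s) + (x - t)) = 4 * Q (x - sc (1/2) (s + t))"
    using Q_sc[OF Vdiff[OF x m], of 2] by simp
  moreover have "Q ((x - s) + (x - t)) + Q (t - s) = 2 * Q (x - s) + 2 * Q (x - t)"
    using Q_parallelogram[OF Vdiff[OF x s] Vdiff[OF x t]] by simp
  ultimately show ?thesis using D by simp
qed

lemma orthogonal_if_minimal: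
  assumes w: "w \<in> V" and s: "s \<in> V" and min: "\<And>m. Q w \<le> Q (w + sc m s)"
  shows "q w s = 0"
proof -
  define c where "c = (cmod (q w s))\<^sup>2"
  define \<epsilon> where "\<epsilon> = 1 / (Q s + 1)"
  have ep: "\<epsilon> > 0" "\<epsilon> * Q s < 1" using Q_nonneg[OF s] by (auto simp: \<epsilon>_def field_simps)
  have "Q w \<le> Q w + \<epsilon>\<^sup>2 * c * Q s - 2 * \<epsilon> * c"
    using min[of "- (of_real \<epsilon> * q w s)"] Q_sub_real_multiple[OF w s, of \<epsilon>] unfolding c_def by simp
  then have "0 \<le> \<epsilon> * c * (\<epsilon> * Q s - 2)" by (simp add: algebra_simps power2_eq_square)
  moreover have "\<epsilon> * Q s - 2 < 0" using ep by simp
  ultimately have "\<epsilon> * c \<le> 0" by (simp add: zero_le_mult_iff)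
  then have "c \<le> 0" using ep by (simp add: mult_le_0_iff)
  then show ?thesis unfolding c_def by simp
qed

lemma sqrt_Q_triangle:
  assumes "x \<in> V" "y \<in> V"
  shows "sqrt (Q (x + y)) \<le> sqrt (Q x) + sqrt (Q y)"
proof -
  have "Q (x + y) = Q x + Q y + 2 * Re (q x y)" using Q_add[OF assms] .
  also have "Re (q x y) \<le> sqrt (Q x) * sqrt (Q y)"
    using cauchy_schwarz[OF assms] complex_Re_le_cmod[of "q x y"] by linarith
  finally have "Q (x + y) \<le> (sqrt (Q x) + sqrt (Q y))^2"
    using Q_nonneg assms by (simp add: power2_eq_square algebra_simps)
  then have "sqrt (Q (x + y)) \<le> sqrt ((sqrt (Q x) + sqrt (Q y))^2)" by (rule real_sqrt_le_mono)
  also have "\<dots> = sqrt (Q x) + sqrt (Q y)" using Q_nonneg assms by simp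
  finally show ?thesis .
qed

lemma cauchy_in: "cauchy X \<Longrightarrow> X n \<in> V" unfolding cauchy_def by auto

lemma cauchy_Q_bounded: assumes c: "cauchy X" shows "\<exists>M. \<forall>n. Q (X n) \<le> M"
proof -
  obtain N where N: "\<And>m n. m \<ge> N \<Longrightarrow> n \<ge> N \<Longrightarrow> Q (X m - X n) < 1"
    using cauchy_D[OF c, of 1] by auto
  have XV: "X n \<in> V" for n using c cauchy_in by auto
  define M where "M = (\<Sum>i\<le>N. Q (X i)) + 2 + 2 * Q (X N)"
  have s0: "(\<Sum>i\<le>N. Q (X i)) \<ge> 0" by (intro sum_nonneg) (simp add: Q_nonneg XV)
  have qN: "Q (X N) \<ge> 0" using Q_nonneg XV by auto
  have "Q (X n) \<le> M" for n
  proof (cases "n \<le> N")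
    case True
    have "Q (X n) \<le> (\<Sum>i\<le>N. Q (X i))"
      by (rule member_le_sum) (use True Q_nonneg XV in auto)
    then show ?thesis unfolding M_def using qN by simp
  next
    case False
    have "X n = (X n - X N) + X N" by simp
    then have "Q (X n) \<le> 2 * Q (X n - X N) + 2 * Q (X N)"
      using Q_add_le[of "X n - X N" "X N"] XV Vdiff by metis
    also have "\<dots> \<le> 2 + 2 * Q (X N)" using N[of n N] False by simp
    finally show ?thesis unfolding M_def using s0 by simp
  qed
  then show ?thesis by blast
qed

lemma cauchy_add: assumes "cauchy X" "cauchy Y" shows "cauchy (\<lambda>n. X n + Y n)"
  unfolding cauchy_def
proof (intro conjI allI impI)
  show "X n + Y n \<in> V" for n using assms cauchy_in Vadd by auto
  fix e :: real assume e: "e > 0"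
  obtain N1 where N1: "\<And>m n. m \<ge> N1 \<Longrightarrow> n \<ge> N1 \<Longrightarrow> Q (X m - X n) < e / 4"
    using cauchy_D[OF assms(1), of "e/4"] e by auto
  obtain N2 where N2: "\<And>m n. m \<ge> N2 \<Longrightarrow> n \<ge> N2 \<Longrightarrow> Q (Y m - Y n) < e / 4"
    using cauchy_D[OF assms(2), of "e/4"] e by auto
  have "Q ((X m + Y m) - (X n + Y n)) < e" if "m \<ge> max N1 N2" "n \<ge> max N1 N2" for m n
  proof -
    have "(X m + Y m) - (X n + Y n) = (X m - X n) + (Y m - Y n)" by simp
    then have "Q ((X m + Y m) - (X n + Y n)) \<le> 2 * Q (X m - X n) + 2 * Q (Y m - Y n)"
      using Q_add_le[of "X m - X n" "Y m - Y n"] assms cauchy_in Vdiff by metis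
    also have "\<dots> < e" using N1[of m n] N2[of m n] that by simp
    finally show ?thesis .
  qed
  then show "\<exists>N. \<forall>m\<ge>N. \<forall>n\<ge>N. Q ((X m + Y m) - (X n + Y n)) < e" by blast
qed

lemma cauchy_sc: assumes "cauchy X" shows "cauchy (\<lambda>n. sc a (X n))"
  unfolding cauchy_def
proof (intro conjI allI impI)
  show "sc a (X n) \<in> V" for n using assms cauchy_in Vsc by auto
  fix e :: real assume e: "e > 0"
  have p: "(cmod a)^2 + 1 > 0" by (simp add: add_nonneg_pos)
  obtain N where N: "\<And>m n. m \<ge> N \<Longrightarrow> n \<ge> N \<Longrightarrow> Q (X m - X n) < e / ((cmod a)^2 + 1)"
    using cauchy_D[OF assms, of "e / ((cmod a)^2 + 1)"] e p by auto
  have "Q (sc a (X m) - sc a (X n)) < e" if "m \<ge> N" "n \<ge> N" for m n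
  proof -
    have q0: "Q (X m - X n) \<ge> 0" using Q_nonneg assms cauchy_in Vdiff by auto
    have "Q (sc a (X m) - sc a (X n)) = (cmod a)^2 * Q (X m - X n)"
      using Q_sc[of "X m - X n" a] assms cauchy_in Vdiff by (simp add: sc_diff)
    also have "\<dots> \<le> ((cmod a)^2 + 1) * Q (X m - X n)" using q0 by (simp add: mult_right_mono)
    also have "\<dots> < ((cmod a)^2 + 1) * (e / ((cmod a)^2 + 1))" by (rule mult_strict_left_mono[OF N[OF that] p])
    also have "\<dots> = e" using p by simp
    finally show ?thesis .
  qed
  then show "\<exists>N. \<forall>m\<ge>N. \<forall>n\<ge>N. Q (sc a (X m) - sc a (X n)) < e" by blast
qed

lemma cauchy_diff: assumes "cauchy X" "cauchy Y" shows "cauchy (\<lambda>n. X n - Y n)"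
  using cauchy_add[OF assms(1) cauchy_sc[OF assms(2), of "-1"]] by (simp add: sc_m1)

lemma cauchy_const: "x \<in> V \<Longrightarrow> cauchy (\<lambda>n. x)"
  unfolding cauchy_def by (simp add: V0)

lemma cauchy_if_near_cauchy:
  assumes "cauchy Y" and "conv (\<lambda>n. e n - Y n) 0" shows "cauchy e"
  using cauchy_add[OF conv_cauchy[OF assms(2)] assms(1)] by simp

lemma conv_if_near_conv:
  assumes "conv e l" and "conv (\<lambda>n. e n - Y n) 0" shows "conv Y l"
  using conv_diff[OF assms] by simp

lemma near_seq_exists:
  assumes dense: "\<And>y. y \<in> V \<Longrightarrow> \<exists>X. (\<forall>n. X n \<in> S) \<and> conv X y" and Y: "\<And>n. Y n \<in> V"
  shows "\<exists>e. (\<forall>n. e n \<in> S) \<and> conv (\<lambda>n. e n - Y n) 0"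
proof -
  have "\<exists>x. x \<in> S \<and> x \<in> V \<and> Q (x - Y n) < 1 / (real n + 1)" for n
  proof -
    obtain X where X: "\<And>m. X m \<in> S" "conv X (Y n)" using dense[OF Y] by blast
    obtain M where "\<And>m. m \<ge> M \<Longrightarrow> \<bar>Q (X m - Y n)\<bar> < 1 / (real n + 1)"
      using LIMSEQ_zero_D[of "\<lambda>m. Q (X m - Y n)" "1 / (real n + 1)"] X(2) by (auto simp: conv_def)
    then have "Q (X M - Y n) < 1 / (real n + 1)" by (simp add: abs_less_iff)
    then show ?thesis using X(1)[of M] conv_in(1)[OF X(2), of M] by blast
  qed
  then obtain e where e: "\<And>n. e n \<in> S" "\<And>n. e n \<in> V" "\<And>n. Q (e n - Y n) < 1 / (real n + 1)"
    using choice[of "\<lambda>n x. x \<in> S \<and> x \<in> V \<and> Q (x - Y n) < 1 / (real n + 1)"] by blast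
  have "conv (\<lambda>n. e n - Y n) 0"
    by (rule conv_if_dominated[OF _ V0 _ one_over_Suc_tendsto_zero]) (use e Y Vdiff in \<open>auto intro: less_imp_le\<close>)
  then show ?thesis using e(1) by blast
qed

lemma q_tendsto_zero_bounded: assumes "\<And>n. A n \<in> V" "\<And>n. B n \<in> V" "(\<lambda>n. Q (A n)) \<longlonglongrightarrow> 0" "\<And>n. Q (B n) \<le> M"
  shows "(\<lambda>n. q (A n) (B n)) \<longlonglongrightarrow> 0"
proof (rule tendsto_zero_if_norm_le)
  show "norm (q (A n) (B n)) \<le> sqrt (Q (A n)) * sqrt M" for n
  proof -
    have "norm (q (A n) (B n)) \<le> sqrt (Q (A n)) * sqrt (Q (B n))" using cauchy_schwarz assms by auto
    also have "\<dots> \<le> sqrt (Q (A n)) * sqrt M" using assms(4) Q_nonneg[OF assms(1)]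
      by (intro mult_left_mono real_sqrt_le_mono) auto
    finally show ?thesis .
  qed
  have "(\<lambda>n. sqrt (Q (A n)) * sqrt M) \<longlonglongrightarrow> sqrt 0 * sqrt M"
    using assms by (intro tendsto_intros) auto
  then show "(\<lambda>n. sqrt (Q (A n)) * sqrt M) \<longlonglongrightarrow> 0" by simp
qed

lemma q_diff_diff: assumes "a \<in> V" "b \<in> V" "c \<in> V" "d \<in> V"
  shows "q a b - q c d = q (a - c) b + q c (b - d)"
  using q_diff_left[of a c b] q_diff_right[of c b d] assms by simp

lemma q_cauchy_diff_tendsto_zero:
  assumes X: "cauchy X" and W: "cauchy W" and X': "cauchy X'" and W': "cauchy W'"
    and dX: "(\<lambda>n. Q (X n - X' n)) \<longlonglongrightarrow> 0" and dW: "(\<lambda>n. Q (W n - W' n)) \<longlonglongrightarrow> 0"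
  shows "(\<lambda>n. q (X n) (W n) - q (X' n) (W' n)) \<longlonglongrightarrow> 0"
proof -
  have in1: "\<And>n. X n \<in> V" "\<And>n. W n \<in> V" "\<And>n. X' n \<in> V" "\<And>n. W' n \<in> V"
    using assms cauchy_in by auto
  obtain MW where MW: "\<And>n. Q (W n) \<le> MW" using cauchy_Q_bounded[OF W] by blast
  obtain MX where MX: "\<And>n. Q (X' n) \<le> MX" using cauchy_Q_bounded[OF X'] by blast
  have t1: "(\<lambda>n. q (X n - X' n) (W n)) \<longlonglongrightarrow> 0"
    by (rule q_tendsto_zero_bounded[OF _ _ dX MW]) (use in1 Vdiff in auto)
  have t2: "(\<lambda>n. q (W n - W' n) (X' n)) \<longlonglongrightarrow> 0"
    by (rule q_tendsto_zero_bounded[OF _ _ dW MX]) (use in1 Vdiff in auto)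
  have "(\<lambda>n. q (X n - X' n) (W n) + cnj (q (W n - W' n) (X' n))) \<longlonglongrightarrow> 0 + cnj 0"
    by (intro tendsto_intros t1 t2)
  moreover have "q (X n) (W n) - q (X' n) (W' n) = q (X n - X' n) (W n) + cnj (q (W n - W' n) (X' n))" for n
  proof -
    have "q (X' n) (W n - W' n) = cnj (q (W n - W' n) (X' n))" using q_herm[of "W n - W' n" "X' n"] in1 Vdiff by auto
    then show ?thesis using q_diff_diff[OF in1(1) in1(2) in1(3) in1(4)] by simp
  qed
  ultimately show ?thesis by simp
qed

lemma q_cauchy_convergent:
  assumes X: "cauchy X" and W: "cauchy W"
  shows "convergent (\<lambda>n. q (X n) (W n))"
proof -
  have in1: "\<And>n. X n \<in> V" "\<And>n. W n \<in> V" using assms cauchy_in by auto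
  obtain MW where MW: "\<And>n. Q (W n) \<le> MW" using cauchy_Q_bounded[OF W] by blast
  obtain MX where MX: "\<And>n. Q (X n) \<le> MX" using cauchy_Q_bounded[OF X] by blast
  have MW0: "MW \<ge> 0" using MW[of 0] Q_nonneg in1 by (meson order_trans)
  have MX0: "MX \<ge> 0" using MX[of 0] Q_nonneg in1 by (meson order_trans)
  define S where "S = sqrt MW + sqrt MX + 1"
  have S0: "S > 0" unfolding S_def using MW0 MX0 by (simp add: add_nonneg_pos)
  have "Cauchy (\<lambda>n. q (X n) (W n))"
  proof (rule CauchyI)
    fix e :: real assume e: "e > 0"
    define d where "d = (e / S)^2"
    have d0: "d > 0" unfolding d_def using e S0 by simp
    have sd: "sqrt d = e / S" unfolding d_def using e S0 by simp
    obtain N1 where N1: "\<And>m n. m \<ge> N1 \<Longrightarrow> n \<ge> N1 \<Longrightarrow> Q (X m - X n) < d"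
      using cauchy_D[OF X d0] by auto
    obtain N2 where N2: "\<And>m n. m \<ge> N2 \<Longrightarrow> n \<ge> N2 \<Longrightarrow> Q (W m - W n) < d"
      using cauchy_D[OF W d0] by auto
    have "norm (q (X m) (W m) - q (X n) (W n)) < e" if "m \<ge> max N1 N2" "n \<ge> max N1 N2" for m n
    proof -
      have "norm (q (X m) (W m) - q (X n) (W n)) = norm (q (X m - X n) (W m) + q (X n) (W m - W n))"
        using q_diff_diff[OF in1(1) in1(2) in1(1) in1(2)] by simp
      also have "\<dots> \<le> norm (q (X m - X n) (W m)) + norm (q (X n) (W m - W n))" by (rule norm_triangle_ineq)
      also have "norm (q (X m - X n) (W m)) \<le> sqrt (Q (X m - X n)) * sqrt (Q (W m))"
        using cauchy_schwarz in1 Vdiff by auto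
      also have "\<dots> \<le> sqrt d * sqrt MW"
        using N1[of m n] that MW[of m] Q_nonneg in1 Vdiff d0
        by (intro mult_mono real_sqrt_le_mono) auto
      also have "norm (q (X n) (W m - W n)) \<le> sqrt (Q (X n)) * sqrt (Q (W m - W n))"
        using cauchy_schwarz in1 Vdiff by auto
      also have "\<dots> \<le> sqrt MX * sqrt d"
        using N2[of m n] that MX[of n] Q_nonneg in1 Vdiff d0 MX0
        by (intro mult_mono real_sqrt_le_mono) auto
      also have "sqrt d * sqrt MW + sqrt MX * sqrt d = sqrt d * (S - 1)" unfolding S_def by (simp add: algebra_simps)
      also have "\<dots> < sqrt d * S" using d0 by simp
      also have "\<dots> = e" using sd S0 by simp
      finally show ?thesis by simp
    qed
    then show "\<exists>M. \<forall>m\<ge>M. \<forall>n\<ge>M. norm (q (X m) (W m) - q (X n) (W n)) < e" by blast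
  qed
  then show ?thesis by (rule Cauchy_convergent)
qed

end

subsection \<open>Projections and the Riesz representation theorem\<close>

locale complete_inner_product_subspace = inner_product_subspace +
  assumes complete: "cauchy X \<Longrightarrow> \<exists>l. conv X l"

context complete_inner_product_subspace begin

text \<open>\<open>S\<close> need not be closed: \<open>p\<close> is the projection onto its closure, obtained as the limit
  of a minimizing sequence.\<close>
lemma orthogonal_projection:
  assumes S: "S \<subseteq> V" "0 \<in> S" "\<And>x y. x \<in> S \<Longrightarrow> y \<in> S \<Longrightarrow> x + y \<in> S" "\<And>a x. x \<in> S \<Longrightarrow> sc a x \<in> S"
    and x: "x \<in> V"
  shows "\<exists>p X. conv X p \<and> (\<forall>n. X n \<in> S) \<and> (\<forall>s\<in>S. q (x - p) s = 0)"
proof -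
  define D where "D = Inf ((\<lambda>s. Q (x - s)) ` S)"
  have ne: "(\<lambda>s. Q (x - s)) ` S \<noteq> {}" using S by auto
  have bdd: "bdd_below ((\<lambda>s. Q (x - s)) ` S)"
    using Q_nonneg Vdiff x S by (auto intro!: bdd_belowI[of _ 0])
  have D_le: "D \<le> Q (x - s)" if "s \<in> S" for s
    unfolding D_def by (rule cInf_lower[OF _ bdd]) (use that in auto)
  have "\<forall>n. \<exists>s. s \<in> S \<and> Q (x - s) < D + 1 / (real n + 1)"
  proof
    fix n
    have "Inf ((\<lambda>s. Q (x - s)) ` S) < D + 1 / (real n + 1)" unfolding D_def by simp
    from cInf_lessD[OF ne this] show "\<exists>s. s \<in> S \<and> Q (x - s) < D + 1 / (real n + 1)" by auto
  qed
  then obtain s where s: "\<And>n. s n \<in> S" "\<And>n. Q (x - s n) < D + 1 / (real n + 1)"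
    using choice[of "\<lambda>n s. s \<in> S \<and> Q (x - s) < D + 1 / (real n + 1)"] by blast
  have sV: "s n \<in> V" for n using s S by auto
  have halfS: "sc (1/2) (s n + s m) \<in> S" for n m using S s by auto
  have cb: "Q (s m - s n) \<le> 2 / (real n + 1) + 2 / (real m + 1)" for m n
    using parallelogram_min_bound[OF x sV[of n] sV[of m] D_le[OF halfS[of n m]]] s(2)[of n] s(2)[of m]
    by linarith
  have "(\<lambda>n. 2 * (1 / (real n + 1))) \<longlonglongrightarrow> 2 * 0" by (intro tendsto_intros one_over_Suc_tendsto_zero)
  then have "cauchy s"
    by (intro cauchy_if_le_null[OF sV, where f="\<lambda>n. 2 / (real n + 1)"]) (use cb in \<open>auto simp: add.commute\<close>)
  then obtain p where p: "conv s p" using complete by blast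
  have pV: "p \<in> V" using p conv_in by auto
  have cx: "conv (\<lambda>n. x - s n) (x - p)" by (rule conv_diff[OF conv_const[OF x] p])
  have "(\<lambda>n. Q (x - s n)) \<longlonglongrightarrow> Q (x - p)" using conv_Q_tendsto[OF cx] by simp
  moreover have "(\<lambda>n. D + 1 / (real n + 1)) \<longlonglongrightarrow> D + 0"
    by (intro tendsto_intros one_over_Suc_tendsto_zero)
  ultimately have Qp: "Q (x - p) \<le> D"
    using LIMSEQ_le[of "\<lambda>n. Q (x - s n)" "Q (x - p)" "\<lambda>n. D + 1 / (real n + 1)" "D + 0"] s(2)
    by (simp add: less_imp_le)
  have orth: "q (x - p) t = 0" if t: "t \<in> S" for t
  proof (rule orthogonal_if_minimal)
    show "x - p \<in> V" using x pV Vdiff by auto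
    show "t \<in> V" using t S by auto
    fix m
    have tS: "s n - sc m t \<in> S" for n
    proof -
      have "s n + sc (-1) (sc m t) \<in> S" using S s t by auto
      then show ?thesis by (simp add: sc_m1)
    qed
    have c2: "conv (\<lambda>n. x - (s n - sc m t)) (x - (p - sc m t))"
      by (rule conv_diff[OF conv_const[OF x] conv_diff[OF p conv_const]]) (use t S Vsc in auto)
    have "D \<le> Q (x - (p - sc m t))"
      by (rule LIMSEQ_le_const[OF conv_Q_tendsto[OF c2]]) (use D_le tS in auto)
    moreover have "x - (p - sc m t) = (x - p) + sc m t" by simp
    ultimately show "Q (x - p) \<le> Q (x - p + sc m t)" using Qp by simp
  qed
  show ?thesis using p s(1) orth by blast
qed

lemma linear_functional_diff:
  assumes "\<And>x y. x \<in> V \<Longrightarrow> y \<in> V \<Longrightarrow> \<phi> (x + y) = \<phi> x + \<phi> y"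
    and "\<And>a x. x \<in> V \<Longrightarrow> \<phi> (sc a x) = a * \<phi> x" and "u \<in> V" "v \<in> V"
  shows "\<phi> (u - v) = \<phi> u - \<phi> v"
  using assms(1)[of u "- v"] assms(2)[of v "-1"] assms(3,4) Vminus by (simp add: sc_m1)

lemma kernel_orthogonal_vector:
  assumes add: "\<And>x y. x \<in> V \<Longrightarrow> y \<in> V \<Longrightarrow> \<phi> (x + y) = \<phi> x + \<phi> y"
    and scl: "\<And>a x. x \<in> V \<Longrightarrow> \<phi> (sc a x) = a * \<phi> x"
    and bnd: "\<And>x. x \<in> V \<Longrightarrow> cmod (\<phi> x) \<le> C * sqrt (Q x)"
    and x: "x \<in> V" "\<phi> x \<noteq> 0"
  shows "\<exists>z\<in>V. \<phi> z \<noteq> 0 \<and> (\<forall>u\<in>V. \<phi> u = 0 \<longrightarrow> q z u = 0)"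
proof -
  have phidiff: "\<phi> (u - v) = \<phi> u - \<phi> v" if "u \<in> V" "v \<in> V" for u v
    using add scl that by (rule linear_functional_diff)
  have phi0: "\<phi> 0 = 0" using scl[of 0 0] V0 by simp
  define N where "N = {y \<in> V. \<phi> y = 0}"
  have NS: "N \<subseteq> V" "0 \<in> N" "\<And>x y. x \<in> N \<Longrightarrow> y \<in> N \<Longrightarrow> x + y \<in> N" "\<And>a x. x \<in> N \<Longrightarrow> sc a x \<in> N"
    unfolding N_def using V0 phi0 Vadd add Vsc scl by auto
  obtain p X where pX: "conv X p" "\<And>n. X n \<in> N" "\<And>s. s \<in> N \<Longrightarrow> q (x - p) s = 0"
    using orthogonal_projection[OF NS x(1)] by blast
  have pV: "p \<in> V" using pX conv_in by auto
  have XV: "X n \<in> V" for n using pX NS by auto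
  have "cmod (\<phi> p) \<le> C * sqrt (Q (X n - p))" for n
  proof -
    have "\<phi> (X n - p) = - \<phi> p" using phidiff[OF XV pV] pX(2)[of n] unfolding N_def by simp
    then show ?thesis using bnd[of "X n - p"] XV pV Vdiff by simp
  qed
  moreover have "(\<lambda>n. C * sqrt (Q (X n - p))) \<longlonglongrightarrow> C * sqrt 0"
    using pX(1) unfolding conv_def by (intro tendsto_intros) auto
  ultimately have "cmod (\<phi> p) \<le> C * sqrt 0"
    by (intro LIMSEQ_le_const[where X="\<lambda>n. C * sqrt (Q (X n - p))"]) auto
  then have "\<phi> (x - p) = \<phi> x" using phidiff[OF x(1) pV] by simp
  then show ?thesis using x pX(3) pV Vdiff unfolding N_def by (intro bexI[of _ "x - p"]) auto
qed

lemma riesz_representation: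
  assumes add: "\<And>x y. x \<in> V \<Longrightarrow> y \<in> V \<Longrightarrow> \<phi> (x + y) = \<phi> x + \<phi> y"
    and scl: "\<And>a x. x \<in> V \<Longrightarrow> \<phi> (sc a x) = a * \<phi> x"
    and bnd: "\<And>x. x \<in> V \<Longrightarrow> cmod (\<phi> x) \<le> C * sqrt (Q x)"
  shows "\<exists>g\<in>V. \<forall>y\<in>V. \<phi> y = q y g"
proof (cases "\<forall>y\<in>V. \<phi> y = 0")
  case True
  then have "\<forall>y\<in>V. \<phi> y = q y 0" by simp
  then show ?thesis using V0 by blast
next
  case False
  then obtain z where zV: "z \<in> V" and phz: "\<phi> z \<noteq> 0" and orth: "\<And>u. u \<in> V \<Longrightarrow> \<phi> u = 0 \<Longrightarrow> q z u = 0"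
    using kernel_orthogonal_vector[OF add scl bnd] by blast
  have qzz: "q z z \<noteq> 0" using q_self_eq_zero zV phz scl[of 0 0] V0 by fastforce
  have key: "\<phi> y * q z z = \<phi> z * q y z" if y: "y \<in> V" for y
  proof -
    \<comment> \<open>\<open>u\<close> lies in the kernel of \<open>\<phi>\<close>, hence is orthogonal to \<open>z\<close>\<close>
    define u where "u = sc (\<phi> y) z - sc (\<phi> z) y"
    have uV: "u \<in> V" using u_def zV y Vsc Vdiff by auto
    have "\<phi> u = \<phi> (sc (\<phi> y) z) - \<phi> (sc (\<phi> z) y)"
      unfolding u_def using add scl zV y Vsc by (intro linear_functional_diff) auto
    then have "\<phi> u = 0" using zV y scl by simp
    then have "q u z = 0" using orth[OF uV] q_herm[OF zV uV] by simp
    moreover have "q u z = \<phi> y * q z z - \<phi> z * q y z"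
      unfolding u_def using q_diff_left[of "sc (\<phi> y) z" "sc (\<phi> z) y" z] q_sc zV y Vsc by auto
    ultimately show ?thesis by simp
  qed
  have "\<phi> y = q y (sc (cnj (\<phi> z / q z z)) z)" if y: "y \<in> V" for y
    using q_sc_right[OF y zV] key[OF y] qzz by (simp add: field_simps)
  then show ?thesis using zV Vsc by blast
qed

end

sublocale complex_hilbert \<subseteq> H: complete_inner_product_subspace sc ip UNIV ip
proof -
  interpret I: inner_product_subspace sc ip UNIV ip
    by unfold_locales (auto simp: ip_add ip_sc ip_pos intro: ip_self_eq_zero ip_cnj)
  have nrm: "nrm ip x = sqrt (I.Q x)" for x unfolding nrm_def I.Q_def ..
  show "complete_inner_product_subspace sc ip UNIV ip"
  proof unfold_locales
    fix X :: "nat \<Rightarrow> 'h" assume "I.cauchy X"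
    then have "\<forall>e>0. \<exists>N. \<forall>m\<ge>N. \<forall>n\<ge>N. nrm ip (X m - X n) < e"
      by (simp add: I.cauchy_iff_sqrt nrm)
    then obtain l where "\<forall>e>0. \<exists>N. \<forall>n\<ge>N. nrm ip (X n - l) < e" using nrm_cauchy_convergent by blast
    then show "\<exists>l. I.conv X l" by (auto simp: I.conv_iff_sqrt nrm)
  qed
qed

context complex_hilbert begin

lemma nrm_eq_sqrt_Q: "nrm ip x = sqrt (H.Q x)" unfolding nrm_def H.Q_def by simp

text \<open>\<open>form_shift T\<close> is \<open>1 + m\<^sub>t\<close>, and \<open>form_ip T\<close> is the inner product \<open>(x, y)\<^sub>t\<close> of the form domain.\<close>
definition form_shift :: "'h form \<Rightarrow> real" where "form_shift T = 1 + form_lb ip T"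
definition form_ip :: "'h form \<Rightarrow> 'h \<Rightarrow> 'h \<Rightarrow> complex" where
  "form_ip T x y = snd T x y + complex_of_real (form_shift T) * ip x y"

lemma dd_formD: assumes "dd_form sc ip T"
  shows "dense_subspace sc ip (fst T)"
    "\<And>x y z. x \<in> fst T \<Longrightarrow> y \<in> fst T \<Longrightarrow> z \<in> fst T \<Longrightarrow> snd T (x + y) z = snd T x z + snd T y z"
    "\<And>a x y. x \<in> fst T \<Longrightarrow> y \<in> fst T \<Longrightarrow> snd T (sc a x) y = a * snd T x y"
    "\<And>x y z. x \<in> fst T \<Longrightarrow> y \<in> fst T \<Longrightarrow> z \<in> fst T \<Longrightarrow> snd T x (y + z) = snd T x y + snd T x z"
    "\<And>a x y. x \<in> fst T \<Longrightarrow> y \<in> fst T \<Longrightarrow> snd T x (sc a y) = cnj a * snd T x y"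
    "\<And>x y. x \<notin> fst T \<or> y \<notin> fst T \<Longrightarrow> snd T x y = 0"
  using assms unfolding dd_form_def by (auto simp: case_prod_beta)

lemma dense_subspaceD: assumes "dense_subspace sc ip D"
  shows "0 \<in> D" "\<And>x y. x \<in> D \<Longrightarrow> y \<in> D \<Longrightarrow> x + y \<in> D" "\<And>a x. x \<in> D \<Longrightarrow> sc a x \<in> D"
    "\<And>x e. e > 0 \<Longrightarrow> \<exists>y\<in>D. nrm ip (x - y) < e"
  using assms unfolding dense_subspace_def by auto

lemma form_polarization:
  assumes dd: "dd_form sc ip T" and x: "x \<in> fst T" and y: "y \<in> fst T"
  shows "snd T (x + y) (x + y) = snd T x x + snd T x y + snd T y x + snd T y y"
    and "snd T (x + sc \<i> y) (x + sc \<i> y) = snd T x x - \<i> * snd T x y + \<i> * snd T y x + snd T y y"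
proof -
  note d = dd_formD[OF dd]
  note s = dense_subspaceD[OF d(1)]
  have iy: "sc \<i> y \<in> fst T" using s y by auto
  show "snd T (x + y) (x + y) = snd T x x + snd T x y + snd T y x + snd T y y"
    using d(2)[OF x y] d(4)[OF x x y] d(4)[OF y x y] s x y by simp
  show "snd T (x + sc \<i> y) (x + sc \<i> y) = snd T x x - \<i> * snd T x y + \<i> * snd T y x + snd T y y"
    using d(2)[OF x iy] d(4)[OF x x iy] d(4)[OF iy x iy] d(5)[OF x y, of \<i>] d(3)[OF y x, of \<i>]
      d(3)[OF y iy, of \<i>] d(5)[OF y y, of \<i>] s x iy by (simp add: algebra_simps)
qed

lemma form_hermitian:
  assumes dd: "dd_form sc ip T" and pos: "positive_form T" and x: "x \<in> fst T" and y: "y \<in> fst T"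
  shows "snd T y x = cnj (snd T x y)"
proof -
  note s = dense_subspaceD[OF dd_formD(1)[OF dd]]
  have im0: "Im (snd T z z) = 0" if "z \<in> fst T" for z using pos that unfolding positive_form_def by auto
  have "Im (snd T x y) + Im (snd T y x) = 0"
    using im0[of "x + y"] im0[OF x] im0[OF y] form_polarization(1)[OF dd x y] s x y by simp
  moreover have "Re (snd T y x) - Re (snd T x y) = 0"
    using im0[of "x + sc \<i> y"] im0[OF x] im0[OF y] form_polarization(2)[OF dd x y] s x y by simp
  ultimately show ?thesis by (simp add: complex_eq_iff)
qed

lemma form_eq_zero_if_diag_zero:
  assumes dd: "dd_form sc ip T" and z: "\<And>z. z \<in> fst T \<Longrightarrow> snd T z z = 0"
    and x: "x \<in> fst T" and y: "y \<in> fst T"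
  shows "snd T x y = 0"
proof -
  note s = dense_subspaceD[OF dd_formD(1)[OF dd]]
  have "snd T x y + snd T y x = 0"
    using form_polarization(1)[OF dd x y] z[of "x + y"] z[OF x] z[OF y] s x y by simp
  moreover have "\<i> * (snd T y x - snd T x y) = 0"
    using form_polarization(2)[OF dd x y] z[of "x + sc \<i> y"] z[OF x] z[OF y] s x y
    by (simp add: algebra_simps)
  ultimately show ?thesis by simp
qed

lemma dense_subspace_unit_vector:
  assumes "dense_subspace sc ip D"
  shows "\<exists>x\<in>D. nrm ip x = 1"
proof -
  note s = dense_subspaceD[OF assms]
  obtain v :: 'h where v: "v \<noteq> 0" using nontriv by blast
  have qv: "H.Q v > 0" using H.Q_eq0[of v] H.Q_nonneg[of v] v by auto
  obtain y where y: "y \<in> D" "nrm ip (v - y) < nrm ip v" using s(4)[of "nrm ip v" v] qv nrm_eq_sqrt_Q by auto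
  have yne: "y \<noteq> 0" using y by auto
  have qy: "H.Q y > 0" using H.Q_eq0[of y] H.Q_nonneg[of y] yne by auto
  define z where "z = sc (complex_of_real (1 / sqrt (H.Q y))) y"
  have "H.Q z = (1 / sqrt (H.Q y))^2 * H.Q y" unfolding z_def using H.Q_sc[of y] H.Q_nonneg[of y] by (simp add: norm_divide)
  also have "\<dots> = 1" using qy by (simp add: power_divide)
  finally have "nrm ip z = 1" using nrm_eq_sqrt_Q by simp
  then show ?thesis using s(3) y z_def by blast
qed

lemma form_lb_nonneg: assumes dd: "dd_form sc ip T" and pos: "positive_form T"
  shows "0 \<le> form_lb ip T"
proof -
  have ne: "{Re (snd T x x) |x. x \<in> fst T \<and> nrm ip x = 1} \<noteq> {}"
    using dense_subspace_unit_vector[OF dd_formD(1)[OF dd]] by auto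
  show ?thesis unfolding form_lb_def
    by (rule cInf_greatest[OF ne]) (use pos in \<open>auto simp: positive_form_def\<close>)
qed

lemma form_shift_ge_1:
  "dd_form sc ip T \<Longrightarrow> positive_form T \<Longrightarrow> form_shift T \<ge> 1"
  using form_lb_nonneg form_shift_def by auto

lemma form_ip_inner_product_subspace: assumes dd: "dd_form sc ip T" and pos: "positive_form T"
  shows "inner_product_subspace sc ip (fst T) (form_ip T)"
proof -
  note d = dd_formD[OF dd]
  note s = dense_subspaceD[OF d(1)]
  have k: "form_shift T \<ge> 1" using form_shift_ge_1[OF dd pos] .
  show ?thesis
  proof (unfold_locales)
    show "0 \<in> fst T" using s by auto
    show "\<And>x y. x \<in> fst T \<Longrightarrow> y \<in> fst T \<Longrightarrow> x + y \<in> fst T" using s by auto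
    show "\<And>x a. x \<in> fst T \<Longrightarrow> sc a x \<in> fst T" using s by auto
    show "\<And>x y z. x \<in> fst T \<Longrightarrow> y \<in> fst T \<Longrightarrow> z \<in> fst T \<Longrightarrow> form_ip T (x + y) z = form_ip T x z + form_ip T y z"
      unfolding form_ip_def using d by (simp add: ip_add algebra_simps)
    show "\<And>x y a. x \<in> fst T \<Longrightarrow> y \<in> fst T \<Longrightarrow> form_ip T (sc a x) y = a * form_ip T x y"
      unfolding form_ip_def using d by (simp add: ip_sc algebra_simps)
    show "form_ip T y x = cnj (form_ip T x y)" if "x \<in> fst T" "y \<in> fst T" for x y
      unfolding form_ip_def using form_hermitian[OF dd pos that] ip_cnj[of x y] by simp
    show "\<And>x. x \<in> fst T \<Longrightarrow> 0 \<le> Re (form_ip T x x)"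
      unfolding form_ip_def using pos k ip_pos unfolding positive_form_def by simp
    show "x = 0" if x: "x \<in> fst T" and q0: "form_ip T x x = 0" for x
    proof -
      have "Re (form_ip T x x) = Re (snd T x x) + form_shift T * Re (ip x x)" unfolding form_ip_def by simp
      then have "Re (snd T x x) + form_shift T * Re (ip x x) = 0" using q0 by simp
      moreover have "Re (snd T x x) \<ge> 0" using pos x unfolding positive_form_def by auto
      moreover have "Re (ip x x) \<ge> 0" by (rule ip_pos)
      ultimately have "Re (ip x x) = 0" using k by (smt (verit) mult_pos_pos)
      then have "H.Q x = 0" unfolding H.Q_def .
      then show "x = 0" using H.Q_eq0 by simp
    qed
  qed
qed

end

section \<open>Closed positive forms\<close>

lemma form_sum_fst: "fst (form_sum T S) = fst T \<inter> fst S" unfolding form_sum_def by simp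
lemma form_sum_snd:
  "x \<in> fst T \<inter> fst S \<Longrightarrow> y \<in> fst T \<inter> fst S \<Longrightarrow> snd (form_sum T S) x y = snd T x y + snd S x y"
  unfolding form_sum_def by simp

lemma closed_pos_form_dd:
  "closed_pos_form sc ip T \<Longrightarrow> dd_form sc ip T" unfolding closed_pos_form_def by simp
lemma closed_pos_form_positive:
  "closed_pos_form sc ip T \<Longrightarrow> positive_form T" unfolding closed_pos_form_def by simp

locale positive_form_on = complex_hilbert +
  fixes T
  assumes dd: "dd_form sc ip T" and pos: "positive_form T"

sublocale positive_form_on \<subseteq> F: inner_product_subspace sc ip "fst T" "form_ip T"
  by (rule form_ip_inner_product_subspace[OF dd pos])

context positive_form_on begin

lemma shift_ge_1: "form_shift T \<ge> 1" using form_shift_ge_1[OF dd pos] .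

lemma F_Q_eq: "F.Q x = Re (snd T x x) + form_shift T * H.Q x"
  unfolding F.Q_def H.Q_def form_ip_def by simp

lemma form_norm_eq: "form_norm ip T x = sqrt (F.Q x)"
  unfolding form_norm_def F_Q_eq form_shift_def H.Q_def by simp

lemma form_diag_nonneg: "x \<in> fst T \<Longrightarrow> Re (snd T x x) \<ge> 0"
  using pos unfolding positive_form_def by auto

lemma H_Q_le_F_Q: "x \<in> fst T \<Longrightarrow> H.Q x \<le> F.Q x"
proof -
  assume x: "x \<in> fst T"
  have "H.Q x \<le> form_shift T * H.Q x" using shift_ge_1 H.Q_nonneg[of x] by (simp add: mult_le_cancel_right1)
  then show ?thesis using form_diag_nonneg[OF x] F_Q_eq by simp
qed

lemma F_conv_H_conv: assumes "F.conv X l" shows "H.conv X l"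
proof (rule H.conv_if_dominated)
  show "H.Q (X n - l) \<le> F.Q (X n - l)" for n
    using assms by (intro H_Q_le_F_Q F.Vdiff) (auto simp: F.conv_def)
qed (use assms in \<open>auto simp: F.conv_def\<close>)

lemma F_cauchy_H_cauchy: assumes "F.cauchy X" shows "H.cauchy X"
proof (rule H.cauchy_if_dominated[where c=1 and P=F.Q])
  show "H.Q (X m - X n) \<le> 1 * F.Q (X m - X n)" for m n
    using assms by (simp add: H_Q_le_F_Q F.Vdiff F.cauchy_def)
qed (use assms F.cauchy_D in auto)

lemma closed_pos_form_iff_complete:
  "closed_pos_form sc ip T \<longleftrightarrow> (\<forall>X. F.cauchy X \<longrightarrow> (\<exists>l. F.conv X l))"
proof -
  have "((\<forall>n. X n \<in> fst T) \<longrightarrow>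
          (\<forall>e>0. \<exists>N. \<forall>m\<ge>N. \<forall>n\<ge>N. sqrt (F.Q (X m - X n)) < e) \<longrightarrow>
          (\<exists>l\<in>fst T. \<forall>e>0. \<exists>N. \<forall>n\<ge>N. sqrt (F.Q (X n - l)) < e))
        \<longleftrightarrow> (F.cauchy X \<longrightarrow> (\<exists>l. F.conv X l))" for X
  proof (cases "\<forall>n. X n \<in> fst T")
    case True
    have "(\<exists>l. F.conv X l) \<longleftrightarrow> (\<exists>l\<in>fst T. F.conv X l)" using F.conv_in by blast
    then show ?thesis using True by (simp add: F.cauchy_iff_sqrt F.conv_iff_sqrt)
  qed (auto simp: F.cauchy_def)
  then show ?thesis unfolding closed_pos_form_def form_norm_eq using dd pos by blast
qed

lemma form_eq_form_ip:
  "x \<in> fst T \<Longrightarrow> y \<in> fst T \<Longrightarrow> snd T x y = form_ip T x y - complex_of_real (form_shift T) * ip x y"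
  unfolding form_ip_def by simp

lemma form_tendsto: assumes "F.conv X l" "F.conv Y m"
  shows "(\<lambda>n. snd T (X n) (Y n)) \<longlonglongrightarrow> snd T l m"
proof -
  have in1: "\<And>n. X n \<in> fst T" "l \<in> fst T" "\<And>n. Y n \<in> fst T" "m \<in> fst T"
    using assms F.conv_in by auto
  have "(\<lambda>n. form_ip T (X n) (Y n) - complex_of_real (form_shift T) * ip (X n) (Y n)) \<longlonglongrightarrow>
        form_ip T l m - complex_of_real (form_shift T) * ip l m"
    by (intro tendsto_intros F.conv_q_tendsto assms H.conv_q_tendsto F_conv_H_conv)
  then show ?thesis using form_eq_form_ip in1 by simp
qed

end

locale closed_form_on = positive_form_on +
  assumes closed: "closed_pos_form sc ip T"

sublocale closed_form_on \<subseteq> F: complete_inner_product_subspace sc ip "fst T" "form_ip T"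
  by unfold_locales (use closed closed_pos_form_iff_complete in blast)

context complex_hilbert begin

lemma closed_form_onI: "closed_pos_form sc ip T \<Longrightarrow> closed_form_on sc ip T"
  by unfold_locales (auto simp: closed_pos_form_def)

lemma dense_subspace_seq:
  assumes "dense_subspace sc ip D"
  shows "\<exists>Y. (\<forall>n. Y n \<in> D) \<and> H.conv Y x"
proof -
  note s = dense_subspaceD[OF assms]
  have "\<forall>n. \<exists>y. y \<in> D \<and> nrm ip (x - y) < 1 / (real n + 1)"
  proof
    fix n
    have "(0::real) < 1 / (real n + 1)" by simp
    from s(4)[OF this, of x] show "\<exists>y. y \<in> D \<and> nrm ip (x - y) < 1 / (real n + 1)" by blast
  qed
  then obtain Y where Y: "\<And>n. Y n \<in> D" "\<And>n. nrm ip (x - Y n) < 1 / (real n + 1)"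
    using choice[of "\<lambda>n y. y \<in> D \<and> nrm ip (x - y) < 1 / (real n + 1)"] by blast
  have le: "H.Q (Y n - x) \<le> 1 / (real n + 1)" for n
  proof -
    have "H.Q (Y n - x) = H.Q (x - Y n)" using H.Q_minus[of "x - Y n"] by simp
    also have "\<dots> = (nrm ip (x - Y n))^2" using nrm_eq_sqrt_Q H.Q_nonneg by simp
    also have "\<dots> \<le> (1 / (real n + 1))^2"
      using Y(2)[of n] by (intro power_mono) (auto simp: nrm_def ip_pos)
    also have "\<dots> \<le> 1 / (real n + 1)"
    proof -
      have "1 \<le> real n + 1" by simp
      then have "1 / ((real n + 1) * (real n + 1)) \<le> 1 / (real n + 1)"
        by (intro divide_left_mono) (auto intro: mult_mono)
      then show ?thesis by (simp add: power2_eq_square)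
    qed
    finally show ?thesis .
  qed
  have "(\<lambda>n. H.Q (Y n - x)) \<longlonglongrightarrow> 0"
    by (rule tendsto_zero_sandwich[OF _ le one_over_Suc_tendsto_zero]) (simp add: H.Q_nonneg)
  then show ?thesis using Y unfolding H.conv_def by auto
qed

lemma orthogonal_dense_eq_zero:
  assumes "dense_subspace sc ip D" "\<And>y. y \<in> D \<Longrightarrow> ip f y = 0"
  shows "f = 0"
proof -
  obtain Y where Y: "\<And>n. Y n \<in> D" "H.conv Y f" using dense_subspace_seq[OF assms(1)] by blast
  have "(\<lambda>n. ip f (Y n)) \<longlonglongrightarrow> ip f f" by (rule H.conv_q_tendsto[OF H.conv_const Y(2)]) simp
  moreover have "(\<lambda>n. ip f (Y n)) = (\<lambda>n. 0)" using assms(2) Y(1) by auto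
  ultimately have "(\<lambda>n. 0) \<longlonglongrightarrow> ip f f" by simp
  then have "ip f f = 0" using LIMSEQ_unique[OF _ tendsto_const] by blast
  then show ?thesis by (rule ip_self_eq_zero)
qed

end

section \<open>The operator associated with a closed form\<close>

definition represents ::
  "(complex \<Rightarrow> 'h::ab_group_add \<Rightarrow> 'h) \<Rightarrow> ('h \<Rightarrow> 'h \<Rightarrow> complex) \<Rightarrow> 'h form \<Rightarrow> 'h op \<Rightarrow> bool" where
  "represents sc ip T A \<longleftrightarrow> pos_sa_op sc ip A \<and> fst A \<subseteq> fst T \<and>
      (\<forall>x\<in>fst A. \<forall>y\<in>fst T. snd T x y = ip (snd A x) y)"

lemma pos_sa_opD: assumes "pos_sa_op sc ip A"
  shows "dense_subspace sc ip (fst A)"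
    "\<And>x y. x \<in> fst A \<Longrightarrow> y \<in> fst A \<Longrightarrow> snd A (x + y) = snd A x + snd A y"
    "\<And>a x. x \<in> fst A \<Longrightarrow> snd A (sc a x) = sc a (snd A x)"
    "\<And>x. x \<notin> fst A \<Longrightarrow> snd A x = 0"
    "{y. \<exists>z. \<forall>x\<in>fst A. ip (snd A x) y = ip x z} = fst A"
    "\<And>x y. x \<in> fst A \<Longrightarrow> y \<in> fst A \<Longrightarrow> ip (snd A x) y = ip x (snd A y)"
    "\<And>x. x \<in> fst A \<Longrightarrow> Re (ip (snd A x) x) \<ge> 0"
  using assms unfolding pos_sa_op_def by (auto simp: case_prod_beta)

context positive_form_on begin

lemma represents_domain_subset:
  assumes a1: "represents sc ip T A1" and a2: "represents sc ip T A2"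
  shows "fst A2 \<subseteq> fst A1"
proof
  fix y assume y: "y \<in> fst A2"
  have "ip (snd A1 x) y = ip x (snd A2 y)" if x: "x \<in> fst A1" for x
  proof -
    have xT: "x \<in> fst T" and yT: "y \<in> fst T" using x y a1 a2 unfolding represents_def by auto
    have "ip (snd A1 x) y = snd T x y" using a1 x yT unfolding represents_def by simp
    also have "\<dots> = cnj (snd T y x)" using form_hermitian[OF dd pos yT xT] by simp
    also have "\<dots> = cnj (ip (snd A2 y) x)" using a2 y xT unfolding represents_def by simp
    also have "\<dots> = ip x (snd A2 y)" using ip_cnj[of x "snd A2 y"] by simp
    finally show ?thesis .
  qed
  then have "y \<in> {y. \<exists>z. \<forall>x\<in>fst A1. ip (snd A1 x) y = ip x z}" by blast
  moreover have "pos_sa_op sc ip A1" using a1 unfolding represents_def by simp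
  ultimately show "y \<in> fst A1" using pos_sa_opD(5) by blast
qed

lemma represents_unique:
  assumes a1: "represents sc ip T A1" and a2: "represents sc ip T A2"
  shows "A1 = A2"
proof -
  have deq: "fst A1 = fst A2" using represents_domain_subset a1 a2 by blast
  have p1: "pos_sa_op sc ip A1" and p2: "pos_sa_op sc ip A2" using a1 a2 unfolding represents_def by auto
  have "snd A1 x = snd A2 x" for x
  proof (cases "x \<in> fst A1")
    case True
    have "ip (snd A1 x - snd A2 x) y = 0" if y: "y \<in> fst A1" for y
    proof -
      have "ip (snd A1 x - snd A2 x) y = ip (snd A1 x) y - ip (snd A2 x) y" by (rule H.q_diff_left) auto
      also have "\<dots> = 0" using a1 a2 True deq y unfolding represents_def by auto
      finally show ?thesis .
    qed
    then have "snd A1 x - snd A2 x = 0" by (rule orthogonal_dense_eq_zero[OF pos_sa_opD(1)[OF p1]])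
    then show ?thesis by simp
  next
    case False
    then show ?thesis using pos_sa_opD(4)[OF p1] pos_sa_opD(4)[OF p2] deq by auto
  qed
  then show ?thesis using deq by (simp add: prod_eq_iff fun_eq_iff)
qed

end

context closed_form_on begin

lemma resolv_ex: "\<exists>g. g \<in> fst T \<and> (\<forall>y\<in>fst T. form_ip T g y = ip f y)"
proof -
  have "\<exists>g\<in>fst T. \<forall>y\<in>fst T. (\<lambda>y. ip y f) y = form_ip T y g"
  proof (rule F.riesz_representation[where C = "sqrt (H.Q f)"])
    show "ip (x + y) f = ip x f + ip y f" for x y by (simp add: ip_add)
    show "ip (sc a x) f = a * ip x f" for a x by (simp add: ip_sc)
    show "cmod (ip x f) \<le> sqrt (H.Q f) * sqrt (F.Q x)" if x: "x \<in> fst T" for x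
    proof -
      have "cmod (ip x f) \<le> sqrt (H.Q x) * sqrt (H.Q f)" by (rule H.cauchy_schwarz) auto
      also have "\<dots> \<le> sqrt (F.Q x) * sqrt (H.Q f)"
        using H_Q_le_F_Q[OF x] H.Q_nonneg[of f] by (intro mult_right_mono real_sqrt_le_mono) auto
      finally show ?thesis by (simp add: mult.commute)
    qed
  qed
  then obtain g where g: "g \<in> fst T" "\<And>y. y \<in> fst T \<Longrightarrow> ip y f = form_ip T y g" by blast
  have "form_ip T g y = ip f y" if y: "y \<in> fst T" for y
  proof -
    have "form_ip T g y = cnj (form_ip T y g)" using F.q_herm[OF y g(1)] .
    also have "\<dots> = cnj (ip y f)" using g(2)[OF y] by simp
    also have "\<dots> = ip f y" using ip_cnj[of f y] by simp
    finally show ?thesis .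
  qed
  then show ?thesis using g(1) by blast
qed

text \<open>\<open>resolv\<close> is \<open>(A\<^sub>t + 1 + m\<^sub>t)\<^sup>-\<^sup>1\<close>: \<open>(resolv f, y)\<^sub>t = (f, y)\<close> for all \<open>y \<in> D(t)\<close>.\<close>
definition resolv :: "'a \<Rightarrow> 'a" where "resolv f = (SOME g. g \<in> fst T \<and> (\<forall>y\<in>fst T. form_ip T g y = ip f y))"

lemma resolv_in: "resolv f \<in> fst T"
  and resolv_form_ip: "y \<in> fst T \<Longrightarrow> form_ip T (resolv f) y = ip f y"
  using someI_ex[OF resolv_ex[of f]] unfolding resolv_def by auto

lemma resolv_unique:
  assumes g: "g \<in> fst T" and r: "\<And>y. y \<in> fst T \<Longrightarrow> form_ip T g y = ip f y"
  shows "g = resolv f"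
proof -
  have d: "g - resolv f \<in> fst T" using g resolv_in F.Vdiff by auto
  have "form_ip T (g - resolv f) (g - resolv f) = form_ip T g (g - resolv f) - form_ip T (resolv f) (g - resolv f)"
    by (rule F.q_diff_left) (use g resolv_in d in auto)
  also have "\<dots> = 0" using r[OF d] resolv_form_ip[OF d] by simp
  finally have "g - resolv f = 0" using F.q_self_eq_zero d by blast
  then show ?thesis by simp
qed

lemma resolv_add: "resolv (f + f') = resolv f + resolv f'"
proof -
  have "resolv f + resolv f' = resolv (f + f')"
  proof (rule resolv_unique)
    show "resolv f + resolv f' \<in> fst T" using resolv_in F.Vadd by auto
    show "form_ip T (resolv f + resolv f') y = ip (f + f') y" if y: "y \<in> fst T" for y
      using F.q_add[OF resolv_in resolv_in y] resolv_form_ip[OF y] by (simp add: ip_add)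
  qed
  then show ?thesis by simp
qed

lemma resolv_sc: "resolv (sc a f) = sc a (resolv f)"
proof -
  have "sc a (resolv f) = resolv (sc a f)"
  proof (rule resolv_unique)
    show "sc a (resolv f) \<in> fst T" using resolv_in F.Vsc by auto
    show "form_ip T (sc a (resolv f)) y = ip (sc a f) y" if y: "y \<in> fst T" for y
      using F.q_sc[OF resolv_in y] resolv_form_ip[OF y] by (simp add: ip_sc)
  qed
  then show ?thesis by simp
qed

lemma resolv_zero: "resolv 0 = 0"
  using resolv_sc[of 0 0] by simp

lemma inj_resolv: "inj resolv"
proof (rule injI)
  fix f f' assume e: "resolv f = resolv f'"
  have "ip (f - f') y = 0" if y: "y \<in> fst T" for y
  proof -
    have "ip (f - f') y = ip f y - ip f' y" by (rule H.q_diff_left) auto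
    also have "\<dots> = 0" using resolv_form_ip[OF y, of f] resolv_form_ip[OF y, of f'] e by simp
    finally show ?thesis .
  qed
  then have "f - f' = 0" by (rule orthogonal_dense_eq_zero[OF dd_formD(1)[OF dd]])
  then show "f = f'" by simp
qed

lemma range_resolv_form_dense:
  assumes y: "y \<in> fst T"
  shows "\<exists>X. (\<forall>n. X n \<in> range resolv) \<and> F.conv X y"
proof -
  have S: "range resolv \<subseteq> fst T" "0 \<in> range resolv" "\<And>x y. x \<in> range resolv \<Longrightarrow> y \<in> range resolv \<Longrightarrow> x + y \<in> range resolv"
      "\<And>a x. x \<in> range resolv \<Longrightarrow> sc a x \<in> range resolv"
    using resolv_in resolv_zero[symmetric] resolv_add[symmetric] resolv_sc[symmetric] by (auto simp: image_iff)
  obtain p X where pX: "F.conv X p" "\<And>n. X n \<in> range resolv" "\<And>s. s \<in> range resolv \<Longrightarrow> form_ip T (y - p) s = 0"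
    using F.orthogonal_projection[OF S y] by blast
  have p: "p \<in> fst T" using pX(1) F.conv_in by auto
  have d: "y - p \<in> fst T" using y p F.Vdiff by auto
  have "ip (y - p) (y - p) = form_ip T (resolv (y - p)) (y - p)" using resolv_form_ip[OF d] by simp
  also have "\<dots> = cnj (form_ip T (y - p) (resolv (y - p)))" using F.q_herm[OF d resolv_in] .
  also have "\<dots> = 0" using pX(3)[of "resolv (y - p)"] by simp
  finally have "y - p = 0" by (rule ip_self_eq_zero)
  then show ?thesis using pX by auto
qed

definition rep_map :: "'a \<Rightarrow> 'a" where
  "rep_map x = (if x \<in> range resolv then inv resolv x - sc (complex_of_real (form_shift T)) x else 0)"

lemma rep_map_resolv: "rep_map (resolv f) = f - sc (complex_of_real (form_shift T)) (resolv f)"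
  unfolding rep_map_def using inv_f_f[OF inj_resolv] by simp

lemma form_eq_rep_map:
  assumes y: "y \<in> fst T"
  shows "snd T (resolv f) y = ip (rep_map (resolv f)) y"
proof -
  have "snd T (resolv f) y = form_ip T (resolv f) y - complex_of_real (form_shift T) * ip (resolv f) y"
    using form_eq_form_ip[OF resolv_in y] .
  also have "\<dots> = ip f y - complex_of_real (form_shift T) * ip (resolv f) y" using resolv_form_ip[OF y] by simp
  also have "\<dots> = ip (f - sc (complex_of_real (form_shift T)) (resolv f)) y"
    using H.q_diff_left[of f "sc (complex_of_real (form_shift T)) (resolv f)" y] by (simp add: ip_sc)
  finally show ?thesis using rep_map_resolv by simp
qed

lemma range_resolv_dense: "dense_subspace sc ip (range resolv)"
  unfolding dense_subspace_def
proof (intro conjI ballI allI impI)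
  show "0 \<in> range resolv" using resolv_zero by (metis rangeI)
  show "x + y \<in> range resolv" if xy: "x \<in> range resolv" "y \<in> range resolv" for x y
  proof -
    obtain a b where ab: "x = resolv a" "y = resolv b" using xy by blast
    then have "x + y = resolv (a + b)" by (simp add: resolv_add)
    then show ?thesis by simp
  qed
  show "sc a x \<in> range resolv" if xr: "x \<in> range resolv" for a x
  proof -
    obtain b where b: "x = resolv b" using xr by blast
    then have "sc a x = resolv (sc a b)" by (simp add: resolv_sc)
    then show ?thesis by simp
  qed
  fix x :: 'a and e :: real assume e: "e > 0"
  obtain y where y: "y \<in> fst T" "nrm ip (x - y) < e / 2"
    using dense_subspaceD(4)[OF dd_formD(1)[OF dd], of "e/2" x] e by auto
  obtain X where X: "\<And>n. X n \<in> range resolv" "F.conv X y" using range_resolv_form_dense[OF y(1)] by blast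
  have lim: "(\<lambda>n. H.Q (X n - y)) \<longlonglongrightarrow> 0" using F_conv_H_conv[OF X(2)] unfolding H.conv_def by simp
  have "\<exists>N. \<forall>n\<ge>N. \<bar>H.Q (X n - y)\<bar> < (e/2)^2" by (rule LIMSEQ_zero_D[OF lim]) (use e in simp)
  then obtain N where N: "\<bar>H.Q (X N - y)\<bar> < (e/2)^2" by blast
  have "nrm ip (y - X N) = sqrt (H.Q (X N - y))"
    using nrm_eq_sqrt_Q H.Q_minus[of "X N - y"] by simp
  also have "\<dots> < sqrt ((e/2)^2)" using N H.Q_nonneg[of "X N - y"] by (simp only: real_sqrt_less_iff)
  also have "\<dots> = e / 2" using e by simp
  finally have a: "nrm ip (y - X N) < e / 2" .
  have "nrm ip (x - X N) \<le> nrm ip (x - y) + nrm ip (y - X N)"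
    using H.sqrt_Q_triangle[of "x - y" "y - X N"] nrm_eq_sqrt_Q by simp
  then have "nrm ip (x - X N) < e" using a y(2) by simp
  then show "\<exists>y\<in>range resolv. nrm ip (x - y) < e" using X(1) by blast
qed

definition rep_op :: "'a op" where "rep_op = (range resolv, rep_map)"

lemma rep_map_add:
  "x \<in> range resolv \<Longrightarrow> y \<in> range resolv \<Longrightarrow> rep_map (x + y) = rep_map x + rep_map y"
proof -
  assume "x \<in> range resolv" "y \<in> range resolv"
  then obtain a b where ab: "x = resolv a" "y = resolv b" by blast
  have "rep_map (x + y) = rep_map (resolv (a + b))" using ab resolv_add by simp
  also have "\<dots> = (a + b) - sc (complex_of_real (form_shift T)) (resolv a + resolv b)" unfolding rep_map_resolv
    by (simp only: resolv_add)
  also have "\<dots> = rep_map x + rep_map y" using ab rep_map_resolv by (simp add: sc_add algebra_simps)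
  finally show ?thesis .
qed

lemma rep_map_sc: "x \<in> range resolv \<Longrightarrow> rep_map (sc a x) = sc a (rep_map x)"
proof -
  assume "x \<in> range resolv"
  then obtain b where b: "x = resolv b" by blast
  have "rep_map (sc a x) = rep_map (resolv (sc a b))" using b resolv_sc by simp
  also have "\<dots> = sc a b - sc (complex_of_real (form_shift T)) (sc a (resolv b))" unfolding rep_map_resolv
    by (simp only: resolv_sc)
  also have "sc (complex_of_real (form_shift T)) (sc a (resolv b)) = sc a (sc (complex_of_real (form_shift T)) (resolv b))"
    by (simp add: sc_mult[symmetric] mult.commute)
  also have "sc a b - sc a (sc (complex_of_real (form_shift T)) (resolv b)) = sc a (rep_map x)"
    using b rep_map_resolv by (simp add: sc_diff)
  finally show ?thesis .
qed

lemma rep_map_symmetric: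
  "x \<in> range resolv \<Longrightarrow> y \<in> range resolv \<Longrightarrow> ip (rep_map x) y = ip x (rep_map y)"
proof -
  assume "x \<in> range resolv" "y \<in> range resolv"
  then obtain a b where ab: "x = resolv a" "y = resolv b" by blast
  have "ip (rep_map x) y = snd T x y" using form_eq_rep_map[OF resolv_in, of a b] ab by simp
  also have "\<dots> = cnj (snd T y x)" using form_hermitian[OF dd pos resolv_in resolv_in, of a b] ab by simp
  also have "snd T y x = ip (rep_map y) x" using form_eq_rep_map[OF resolv_in, of b a] ab by simp
  also have "cnj (ip (rep_map y) x) = ip x (rep_map y)" using ip_cnj[of x "rep_map y"] by simp
  finally show ?thesis .
qed

lemma adjoint_domain_subset_range_resolv:
  assumes z: "\<And>x. x \<in> range resolv \<Longrightarrow> ip (rep_map x) y = ip x z"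
  shows "y \<in> range resolv"
proof -
  define k where "k = complex_of_real (form_shift T)"
  define w where "w = z + sc k y"
  have "ip f y = ip f (resolv w)" for f
  proof -
    have "ip (rep_map (resolv f)) y = ip (resolv f) z" using z by blast
    moreover have "ip (rep_map (resolv f)) y = ip f y - k * ip (resolv f) y"
      unfolding rep_map_resolv k_def using H.q_diff_left[of f "sc (complex_of_real (form_shift T)) (resolv f)" y]
      by (simp add: ip_sc)
    ultimately have "ip f y = ip (resolv f) z + k * ip (resolv f) y" by (simp add: algebra_simps)
    also have "\<dots> = ip (resolv f) w"
      unfolding w_def using H.q_add_right[of "resolv f" z "sc k y"] H.q_sc_right[of "resolv f" y k]
      by (simp add: k_def)
    also have "ip (resolv f) w = cnj (ip w (resolv f))" by (rule ip_cnj)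
    also have "ip w (resolv f) = form_ip T (resolv w) (resolv f)" using resolv_form_ip[OF resolv_in] by simp
    also have "cnj (form_ip T (resolv w) (resolv f)) = form_ip T (resolv f) (resolv w)"
      using F.q_herm[OF resolv_in resolv_in, of w f] by simp
    also have "\<dots> = ip f (resolv w)" using resolv_form_ip[OF resolv_in] by simp
    finally show ?thesis .
  qed
  then have "ip (y - resolv w) (y - resolv w) = 0"
    using H.q_diff_right[of "y - resolv w" y "resolv w"] by simp
  then have "y - resolv w = 0" by (rule ip_self_eq_zero)
  then show ?thesis by (metis diff_eq_eq add_0 rangeI)
qed

lemma rep_op_pos_sa: "pos_sa_op sc ip rep_op"
  unfolding pos_sa_op_def rep_op_def case_prod_conv
proof (intro conjI ballI allI impI)
  show "dense_subspace sc ip (range resolv)" by (rule range_resolv_dense)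
  show "rep_map x = 0" if "x \<notin> range resolv" for x using that unfolding rep_map_def by simp
  show "0 \<le> Re (ip (rep_map x) x)" if x: "x \<in> range resolv" for x
  proof -
    obtain a where a: "x = resolv a" using x by blast
    have "ip (rep_map x) x = snd T x x" using form_eq_rep_map[OF resolv_in, of a a] a by simp
    then show ?thesis using form_diag_nonneg[OF resolv_in, of a] a by simp
  qed
  show "{y. \<exists>z. \<forall>x\<in>range resolv. ip (rep_map x) y = ip x z} = range resolv"
    using rep_map_symmetric adjoint_domain_subset_range_resolv by blast
qed (auto simp: rep_map_add rep_map_sc rep_map_symmetric)

lemma represents_rep_op: "represents sc ip T rep_op"
  unfolding represents_def
proof (intro conjI)
  show "pos_sa_op sc ip rep_op" by (rule rep_op_pos_sa)
  show "fst rep_op \<subseteq> fst T" unfolding rep_op_def using resolv_in by auto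
  show "\<forall>x\<in>fst rep_op. \<forall>y\<in>fst T. snd T x y = ip (snd rep_op x) y"
    unfolding rep_op_def using form_eq_rep_map by auto
qed

lemma assoc_op_eq_rep_op: "assoc_op sc ip T = rep_op"
  unfolding assoc_op_def
  using represents_unique represents_rep_op unfolding represents_def by (intro the_equality) blast+

lemma represents_assoc_op: "represents sc ip T (assoc_op sc ip T)"
  using represents_rep_op assoc_op_eq_rep_op by simp

lemma assoc_op_form_dense:
  assumes "y \<in> fst T"
  shows "\<exists>X. (\<forall>n. X n \<in> fst (assoc_op sc ip T)) \<and> F.conv X y"
  using range_resolv_form_dense[OF assms] assoc_op_eq_rep_op unfolding rep_op_def by simp

end

locale same_assoc_op = complex_hilbert +
  fixes T S
  assumes cT: "closed_pos_form sc ip T" and cS: "closed_pos_form sc ip S"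
    and eq: "assoc_op sc ip T = assoc_op sc ip S"

sublocale same_assoc_op \<subseteq> A: closed_form_on sc ip T
  by (rule closed_form_onI[OF cT])

sublocale same_assoc_op \<subseteq> B: closed_form_on sc ip S
  by (rule closed_form_onI[OF cS])

context same_assoc_op begin

lemma assoc_op_props:
  "pos_sa_op sc ip (assoc_op sc ip T)" "fst (assoc_op sc ip T) \<subseteq> fst T" "fst (assoc_op sc ip T) \<subseteq> fst S"
  "\<And>x y. x \<in> fst (assoc_op sc ip T) \<Longrightarrow> y \<in> fst T \<Longrightarrow> snd T x y = ip (snd (assoc_op sc ip T) x) y"
  "\<And>x y. x \<in> fst (assoc_op sc ip T) \<Longrightarrow> y \<in> fst S \<Longrightarrow> snd S x y = ip (snd (assoc_op sc ip T) x) y"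
  using A.represents_assoc_op B.represents_assoc_op eq unfolding represents_def by auto

lemma S_Q_le_T_Q:
  assumes v: "v \<in> fst (assoc_op sc ip T)"
  shows "B.F.Q v \<le> form_shift S * A.F.Q v"
proof -
  have vT: "v \<in> fst T" and vS: "v \<in> fst S" using v assoc_op_props by auto
  have "snd S v v = snd T v v" using assoc_op_props(4)[OF v vT] assoc_op_props(5)[OF v vS] by simp
  then show ?thesis
    using summand_le_scaled_sum[of "Re (snd T v v)" 0 "H.Q v" "form_shift S" "form_shift T"]
      A.form_diag_nonneg[OF vT] H.Q_nonneg B.shift_ge_1 A.shift_ge_1
    by (simp add: A.F_Q_eq B.F_Q_eq)
qed

lemma domain_transfer: assumes y: "y \<in> fst T"
  shows "y \<in> fst S \<and> (\<exists>X. (\<forall>n. X n \<in> fst (assoc_op sc ip T)) \<and> A.F.conv X y \<and> B.F.conv X y)"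
proof -
  obtain X where X: "\<And>n. X n \<in> fst (assoc_op sc ip T)" "A.F.conv X y" using A.assoc_op_form_dense[OF y] by blast
  have ds: "dense_subspace sc ip (fst (assoc_op sc ip T))" using pos_sa_opD(1)[OF assoc_op_props(1)] .
  have diffin: "X m - X n \<in> fst (assoc_op sc ip T)" for m n
  proof -
    have "X m + sc (-1) (X n) \<in> fst (assoc_op sc ip T)" using dense_subspaceD[OF ds] X(1) by auto
    then show ?thesis by (simp add: sc_m1)
  qed
  have ca: "A.F.cauchy X" using A.F.conv_cauchy[OF X(2)] .
  have cb: "B.F.cauchy X"
  proof (rule B.F.cauchy_if_dominated[where c="form_shift S" and P=A.F.Q])
    show "X n \<in> fst S" for n using X(1) assoc_op_props(3) by auto
    show "B.F.Q (X m - X n) \<le> form_shift S * A.F.Q (X m - X n)" for m n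
      using S_Q_le_T_Q[OF diffin] .
  qed (use B.shift_ge_1 A.F.cauchy_D[OF ca] in auto)
  obtain y' where y': "B.F.conv X y'" using B.F.complete[OF cb] by blast
  have "y = y'" using H.conv_unique[OF A.F_conv_H_conv[OF X(2)] B.F_conv_H_conv[OF y']] .
  then show ?thesis using y' X B.F.conv_in by auto
qed

end

context complex_hilbert begin

lemma assoc_op_inj:
  assumes cT: "closed_pos_form sc ip T" and cS: "closed_pos_form sc ip S"
    and eq: "assoc_op sc ip T = assoc_op sc ip S"
  shows "T = S"
proof -
  interpret same_assoc_op sc ip T S by unfold_locales (use cT cS eq in auto)
  interpret U: same_assoc_op sc ip S T by unfold_locales (use cT cS eq in auto)
  have dom: "fst T = fst S" using domain_transfer U.domain_transfer by blast
  have vals: "snd T y z = snd S y z" for y z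
  proof (cases "y \<in> fst T \<and> z \<in> fst T")
    case True
    obtain X where X: "\<And>n. X n \<in> fst (assoc_op sc ip T)" "A.F.conv X y" "B.F.conv X y"
      using domain_transfer True by blast
    obtain W where W: "\<And>n. W n \<in> fst (assoc_op sc ip T)" "A.F.conv W z" "B.F.conv W z"
      using domain_transfer True by blast
    have l1: "(\<lambda>n. snd T (X n) (W n)) \<longlonglongrightarrow> snd T y z" by (rule A.form_tendsto[OF X(2) W(2)])
    have l2: "(\<lambda>n. snd S (X n) (W n)) \<longlonglongrightarrow> snd S y z" by (rule B.form_tendsto[OF X(3) W(3)])
    have "snd T (X n) (W n) = snd S (X n) (W n)" for n
    proof -
      have "W n \<in> fst T" "W n \<in> fst S" using W(1) assoc_op_props by auto
      then show ?thesis using assoc_op_props(4)[OF X(1)] assoc_op_props(5)[OF X(1)] by simp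
    qed
    then have "(\<lambda>n. snd S (X n) (W n)) \<longlonglongrightarrow> snd T y z" using l1 by simp
    then show ?thesis using LIMSEQ_unique[OF _ l2] by blast
  next
    case False
    then show ?thesis using dd_formD(6)[OF A.dd] dd_formD(6)[OF B.dd] dom by auto
  qed
  have "snd T = snd S" using vals by (intro ext)
  then show ?thesis using dom by (simp add: prod_eq_iff)
qed

end

section \<open>The closed form of a positive self-adjoint operator\<close>

definition graph_ip :: "('h::ab_group_add \<Rightarrow> 'h \<Rightarrow> complex) \<Rightarrow> 'h op \<Rightarrow> 'h \<Rightarrow> 'h \<Rightarrow> complex" where
  "graph_ip ip A x y = ip (snd A x + x) y"

context complex_hilbert begin

lemma graph_ip_inner_product_subspace: assumes psa: "pos_sa_op sc ip A"
  shows "inner_product_subspace sc ip (fst A) (graph_ip ip A)"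
proof -
  note p = pos_sa_opD[OF psa]
  note s = dense_subspaceD[OF p(1)]
  show ?thesis
  proof unfold_locales
    show "0 \<in> fst A" using s by auto
    show "\<And>x y. x \<in> fst A \<Longrightarrow> y \<in> fst A \<Longrightarrow> x + y \<in> fst A" using s by auto
    show "\<And>x a. x \<in> fst A \<Longrightarrow> sc a x \<in> fst A" using s by auto
    show "graph_ip ip A (x + y) z = graph_ip ip A x z + graph_ip ip A y z" if "x \<in> fst A" "y \<in> fst A" "z \<in> fst A" for x y z
      unfolding graph_ip_def using p(2)[OF that(1,2)] by (simp add: ip_add algebra_simps)
    show "graph_ip ip A (sc a x) y = a * graph_ip ip A x y" if "x \<in> fst A" "y \<in> fst A" for x y a
      unfolding graph_ip_def using p(3)[OF that(1)] by (simp add: ip_sc sc_add[symmetric])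
    show "graph_ip ip A y x = cnj (graph_ip ip A x y)" if x: "x \<in> fst A" and y: "y \<in> fst A" for x y
    proof -
      have "graph_ip ip A y x = ip (snd A y) x + ip y x" unfolding graph_ip_def by (simp add: ip_add)
      also have "ip (snd A y) x = cnj (ip x (snd A y))" by (rule ip_cnj)
      also have "ip x (snd A y) = ip (snd A x) y" using p(6)[OF x y] by simp
      also have "ip y x = cnj (ip x y)" by (rule ip_cnj)
      finally show ?thesis unfolding graph_ip_def by (simp add: ip_add)
    qed
    show "0 \<le> Re (graph_ip ip A x x)" if x: "x \<in> fst A" for x
      unfolding graph_ip_def using p(7)[OF x] ip_pos[of x] by (simp add: ip_add)
    show "x = 0" if x: "x \<in> fst A" and q0: "graph_ip ip A x x = 0" for x
    proof -
      have "ip (snd A x) x + ip x x = 0" using q0 unfolding graph_ip_def by (simp add: ip_add)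
      then have "Re (ip (snd A x) x + ip x x) = 0" by simp
      then have "Re (ip (snd A x) x) + Re (ip x x) = 0" by simp
      then have "Re (ip x x) = 0" using p(7)[OF x] ip_pos[of x] by simp
      then have "H.Q x = 0" unfolding H.Q_def .
      then show ?thesis using H.Q_eq0 by simp
    qed
  qed
qed

end

locale pos_sa_op_on = complex_hilbert +
  fixes A
  assumes psa: "pos_sa_op sc ip A"

sublocale pos_sa_op_on \<subseteq> E: inner_product_subspace sc ip "fst A" "graph_ip ip A"
  by (rule graph_ip_inner_product_subspace[OF psa])

context pos_sa_op_on begin

lemma E_Q_eq: "E.Q x = Re (ip (snd A x) x) + H.Q x"
  unfolding E.Q_def H.Q_def graph_ip_def by (simp add: ip_add)

lemma H_Q_le_E_Q: "x \<in> fst A \<Longrightarrow> H.Q x \<le> E.Q x"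
  using E_Q_eq pos_sa_opD(7)[OF psa] by simp

lemma E_cauchy_H_cauchy: assumes "E.cauchy X" shows "H.cauchy X"
proof (rule H.cauchy_if_dominated[where c=1 and P=E.Q])
  show "H.Q (X m - X n) \<le> 1 * E.Q (X m - X n)" for m n
    using assms by (simp add: H_Q_le_E_Q E.Vdiff E.cauchy_in)
qed (use assms E.cauchy_D in auto)

lemma E_Q_le_if_near:
  assumes x: "x \<in> fst A" and XA: "\<And>m. X m \<in> fst A" and h: "H.conv X 0"
    and bnd: "\<And>m. m \<ge> N \<Longrightarrow> E.Q (x - X m) \<le> r"
  shows "E.Q x \<le> r"
proof -
  have Q0: "E.Q x \<ge> 0" using E.Q_nonneg[OF x] .
  \<comment> \<open>\<open>X\<close> tends to \<open>0\<close> in \<open>\<H>\<close>, hence weakly for the graph inner product\<close>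
  have "(\<lambda>m. ip (snd A x + x) (X m)) \<longlonglongrightarrow> ip (snd A x + x) 0"
    by (rule H.conv_q_tendsto[OF H.conv_const h]) simp
  then have "(\<lambda>m. graph_ip ip A x x - graph_ip ip A x (X m)) \<longlonglongrightarrow> graph_ip ip A x x - 0"
    by (intro tendsto_intros) (simp add: graph_ip_def)
  then have "(\<lambda>m. graph_ip ip A x (x - X m)) \<longlonglongrightarrow> graph_ip ip A x x - 0"
    using E.q_diff_right[OF x x XA] by simp
  then have "(\<lambda>m. cmod (graph_ip ip A x (x - X m))) \<longlonglongrightarrow> E.Q x"
    using E.q_real[OF x] Q0 by (auto dest: tendsto_norm)
  moreover have "cmod (graph_ip ip A x (x - X m)) \<le> sqrt (E.Q x) * sqrt r" if "m \<ge> N" for m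
    using E.cauchy_schwarz[OF x E.Vdiff[OF x XA]] bnd[OF that] Q0
    by (meson mult_left_mono order_trans real_sqrt_ge_zero real_sqrt_le_mono)
  ultimately have "E.Q x \<le> sqrt (E.Q x) * sqrt r" by (intro LIMSEQ_le_const2) auto
  moreover have "0 \<le> r" using bnd[of N] E.Q_nonneg[OF E.Vdiff[OF x XA]] by (meson order_refl order_trans)
  ultimately show ?thesis using le_if_le_sqrt_mult Q0 by blast
qed

lemma E_null_if_H_null:
  assumes c: "E.cauchy X" and h: "H.conv X 0"
  shows "(\<lambda>n. E.Q (X n)) \<longlonglongrightarrow> 0"
  unfolding LIMSEQ_iff
proof (intro allI impI)
  fix r :: real assume r: "r > 0"
  have XA: "X n \<in> fst A" for n using c E.cauchy_in by auto
  obtain N where N: "\<And>m n. m \<ge> N \<Longrightarrow> n \<ge> N \<Longrightarrow> E.Q (X m - X n) < r / 2"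
    using E.cauchy_D[OF c, of "r/2"] r by auto
  have "E.Q (X n) \<le> r / 2" if "n \<ge> N" for n
    by (rule E_Q_le_if_near[OF XA XA h]) (use N[OF that] in \<open>auto intro: less_imp_le\<close>)
  then have "norm (E.Q (X n) - 0) < r" if "n \<ge> N" for n
    using that E.Q_nonneg[OF XA] r by fastforce
  then show "\<exists>N. \<forall>n\<ge>N. norm (E.Q (X n) - 0) < r" by blast
qed

text \<open>The closure of the form \<open>(Ax, y)\<close>: its domain consists of the \<open>\<H>\<close>-limits of sequences
  in \<open>D(A)\<close> that are Cauchy for the graph inner product, and by closability its value does
  not depend on the chosen sequence.\<close>

definition approximates :: "'a \<Rightarrow> (nat \<Rightarrow> 'a) \<Rightarrow> bool" where
  "approximates y X \<longleftrightarrow> E.cauchy X \<and> H.conv X y"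

definition clos_dom :: "'a set" where "clos_dom = {y. \<exists>X. approximates y X}"

definition approx_seq :: "'a \<Rightarrow> nat \<Rightarrow> 'a" where "approx_seq y = (SOME X. approximates y X)"

definition clos_val :: "'a \<Rightarrow> 'a \<Rightarrow> complex" where
  "clos_val y z = (if y \<in> clos_dom \<and> z \<in> clos_dom
     then lim (\<lambda>n. graph_ip ip A (approx_seq y n) (approx_seq z n)) - ip y z else 0)"

lemma approx_seq: assumes "y \<in> clos_dom" shows "approximates y (approx_seq y)"
proof -
  from assms obtain X where "approximates y X" unfolding clos_dom_def by auto
  then show ?thesis unfolding approx_seq_def by (rule someI[of "approximates y" X])
qed

lemma approximates_same_limit:
  assumes "approximates y X" "approximates y X'"
  shows "(\<lambda>n. E.Q (X n - X' n)) \<longlonglongrightarrow> 0"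
proof (rule E_null_if_H_null)
  show "E.cauchy (\<lambda>n. X n - X' n)" using assms E.cauchy_diff unfolding approximates_def by blast
  show "H.conv (\<lambda>n. X n - X' n) 0" using H.conv_diff[of X y X' y] assms unfolding approximates_def by simp
qed

lemma clos_val_tendsto: assumes y: "approximates y X" and z: "approximates z W"
  shows "(\<lambda>n. graph_ip ip A (X n) (W n)) \<longlonglongrightarrow> clos_val y z + ip y z"
proof -
  have yD: "y \<in> clos_dom" and zD: "z \<in> clos_dom" using y z unfolding clos_dom_def by auto
  have sy: "approximates y (approx_seq y)" and sz: "approximates z (approx_seq z)" using approx_seq yD zD by auto
  have cv: "convergent (\<lambda>n. graph_ip ip A (approx_seq y n) (approx_seq z n))"
    by (rule E.q_cauchy_convergent) (use sy sz in \<open>auto simp: approximates_def\<close>)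
  then have l0: "(\<lambda>n. graph_ip ip A (approx_seq y n) (approx_seq z n)) \<longlonglongrightarrow> clos_val y z + ip y z"
    unfolding clos_val_def using yD zD by (simp add: convergent_LIMSEQ_iff)
  have d: "(\<lambda>n. graph_ip ip A (X n) (W n) - graph_ip ip A (approx_seq y n) (approx_seq z n)) \<longlonglongrightarrow> 0"
    by (rule E.q_cauchy_diff_tendsto_zero) (use y z sy sz approximates_same_limit in \<open>auto simp: approximates_def\<close>)
  have "(\<lambda>n. (graph_ip ip A (X n) (W n) - graph_ip ip A (approx_seq y n) (approx_seq z n)) + graph_ip ip A (approx_seq y n) (approx_seq z n)) \<longlonglongrightarrow> 0 + (clos_val y z + ip y z)"
    by (intro tendsto_intros d l0)
  then show ?thesis by simp
qed

lemma approximates_const: "x \<in> fst A \<Longrightarrow> approximates x (\<lambda>n. x)"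
  unfolding approximates_def using E.cauchy_const H.conv_const by auto

lemma approximates_add:
  "approximates y X \<Longrightarrow> approximates y' X' \<Longrightarrow> approximates (y + y') (\<lambda>n. X n + X' n)"
  unfolding approximates_def using E.cauchy_add H.conv_add by auto

lemma approximates_sc:
  "approximates y X \<Longrightarrow> approximates (sc a y) (\<lambda>n. sc a (X n))"
  unfolding approximates_def using E.cauchy_sc H.conv_sc by auto

lemma approximates_diff:
  "approximates y X \<Longrightarrow> approximates y' X' \<Longrightarrow> approximates (y - y') (\<lambda>n. X n - X' n)"
  unfolding approximates_def using E.cauchy_diff H.conv_diff by auto

lemma approximates_in: "approximates y X \<Longrightarrow> X n \<in> fst A"
  unfolding approximates_def using E.cauchy_in by auto

lemma op_domain_subset_clos_dom: "fst A \<subseteq> clos_dom"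
  unfolding clos_dom_def using approximates_const by blast

lemma clos_dom_dense_subspace: "dense_subspace sc ip clos_dom"
proof -
  note s = dense_subspaceD[OF pos_sa_opD(1)[OF psa]]
  show ?thesis unfolding dense_subspace_def
  proof (intro conjI ballI allI impI)
    show "0 \<in> clos_dom" using op_domain_subset_clos_dom s by auto
    show "x + y \<in> clos_dom" if "x \<in> clos_dom" "y \<in> clos_dom" for x y
      using that approximates_add unfolding clos_dom_def by blast
    show "sc a x \<in> clos_dom" if "x \<in> clos_dom" for a x
      using that approximates_sc unfolding clos_dom_def by blast
    show "\<exists>y\<in>clos_dom. nrm ip (x - y) < e" if "e > 0" for x e
      using s(4)[OF that, of x] op_domain_subset_clos_dom by blast
  qed
qed

lemma clos_val_op:
  assumes x: "x \<in> fst A" and z: "z \<in> clos_dom"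
  shows "clos_val x z = ip (snd A x) z"
proof -
  have sz: "approximates z (approx_seq z)" using approx_seq[OF z] .
  have l1: "(\<lambda>n. graph_ip ip A x (approx_seq z n)) \<longlonglongrightarrow> clos_val x z + ip x z"
    by (rule clos_val_tendsto[OF approximates_const[OF x] sz])
  have "(\<lambda>n. ip (snd A x + x) (approx_seq z n)) \<longlonglongrightarrow> ip (snd A x + x) z"
    by (rule H.conv_q_tendsto[OF H.conv_const]) (use sz in \<open>auto simp: approximates_def\<close>)
  then have l2: "(\<lambda>n. graph_ip ip A x (approx_seq z n)) \<longlonglongrightarrow> ip (snd A x + x) z"
    unfolding graph_ip_def .
  have "clos_val x z + ip x z = ip (snd A x + x) z" using LIMSEQ_unique[OF l1 l2] .
  then show ?thesis by (simp add: ip_add)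
qed

definition clos_form :: "'a form" where "clos_form = (clos_dom, clos_val)"

lemma clos_val_outside:
  "x \<notin> clos_dom \<or> y \<notin> clos_dom \<Longrightarrow> clos_val x y = 0"
  unfolding clos_val_def by auto

lemma clos_val_eq_lim:
  assumes "approximates y X" "approximates z W" "(\<lambda>n. graph_ip ip A (X n) (W n)) \<longlonglongrightarrow> c"
  shows "clos_val y z + ip y z = c"
  using LIMSEQ_unique[OF clos_val_tendsto[OF assms(1,2)] assms(3)] .

lemma clos_val_add_left:
  assumes "x \<in> clos_dom" "y \<in> clos_dom" "z \<in> clos_dom"
  shows "clos_val (x + y) z = clos_val x z + clos_val y z"
proof -
  have a: "approximates x (approx_seq x)" "approximates y (approx_seq y)" "approximates z (approx_seq z)"
    using approx_seq assms by auto
  have "graph_ip ip A (approx_seq x n + approx_seq y n) (approx_seq z n) =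
      graph_ip ip A (approx_seq x n) (approx_seq z n) + graph_ip ip A (approx_seq y n) (approx_seq z n)" for n
    by (rule E.q_add) (use a approximates_in in auto)
  then have "clos_val (x + y) z + ip (x + y) z = (clos_val x z + ip x z) + (clos_val y z + ip y z)"
    by (intro clos_val_eq_lim[OF approximates_add[OF a(1,2)] a(3)]) (simp add: tendsto_add clos_val_tendsto a)
  then show ?thesis by (simp add: ip_add)
qed

lemma clos_val_sc_left:
  assumes "x \<in> clos_dom" "y \<in> clos_dom"
  shows "clos_val (sc a x) y = a * clos_val x y"
proof -
  have b: "approximates x (approx_seq x)" "approximates y (approx_seq y)" using approx_seq assms by auto
  have "graph_ip ip A (sc a (approx_seq x n)) (approx_seq y n) = a * graph_ip ip A (approx_seq x n) (approx_seq y n)" for n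
    by (rule E.q_sc) (use b approximates_in in auto)
  then have "clos_val (sc a x) y + ip (sc a x) y = a * (clos_val x y + ip x y)"
    by (intro clos_val_eq_lim[OF approximates_sc[OF b(1)] b(2)]) (simp add: tendsto_mult_left clos_val_tendsto b)
  then show ?thesis by (simp add: ip_sc algebra_simps)
qed

lemma clos_val_add_right:
  assumes "x \<in> clos_dom" "y \<in> clos_dom" "z \<in> clos_dom"
  shows "clos_val x (y + z) = clos_val x y + clos_val x z"
proof -
  have a: "approximates x (approx_seq x)" "approximates y (approx_seq y)" "approximates z (approx_seq z)"
    using approx_seq assms by auto
  have "graph_ip ip A (approx_seq x n) (approx_seq y n + approx_seq z n) =
      graph_ip ip A (approx_seq x n) (approx_seq y n) + graph_ip ip A (approx_seq x n) (approx_seq z n)" for n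
    by (rule E.q_add_right) (use a approximates_in in auto)
  then have "clos_val x (y + z) + ip x (y + z) = (clos_val x y + ip x y) + (clos_val x z + ip x z)"
    by (intro clos_val_eq_lim[OF a(1) approximates_add[OF a(2,3)]]) (simp add: tendsto_add clos_val_tendsto a)
  moreover have "ip x (y + z) = ip x y + ip x z" by (rule H.q_add_right) auto
  ultimately show ?thesis by simp
qed

lemma clos_val_sc_right:
  assumes "x \<in> clos_dom" "y \<in> clos_dom"
  shows "clos_val x (sc a y) = cnj a * clos_val x y"
proof -
  have b: "approximates x (approx_seq x)" "approximates y (approx_seq y)" using approx_seq assms by auto
  have "graph_ip ip A (approx_seq x n) (sc a (approx_seq y n)) = cnj a * graph_ip ip A (approx_seq x n) (approx_seq y n)" for n
    by (rule E.q_sc_right) (use b approximates_in in auto)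
  then have "clos_val x (sc a y) + ip x (sc a y) = cnj a * (clos_val x y + ip x y)"
    by (intro clos_val_eq_lim[OF b(1) approximates_sc[OF b(2)]]) (simp add: tendsto_mult_left clos_val_tendsto b)
  moreover have "ip x (sc a y) = cnj a * ip x y" by (rule H.q_sc_right) auto
  ultimately show ?thesis by (simp add: algebra_simps)
qed

lemma clos_form_dd: "dd_form sc ip clos_form"
  unfolding dd_form_def clos_form_def case_prod_conv
  by (intro conjI ballI allI impI clos_dom_dense_subspace clos_val_outside clos_val_add_left
      clos_val_sc_left clos_val_add_right clos_val_sc_right)

lemma clos_form_positive: "positive_form clos_form"
  unfolding positive_form_def clos_form_def fst_conv snd_conv
proof
  fix y assume y: "y \<in> clos_dom"
  have b: "approximates y (approx_seq y)" using approx_seq y by auto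
  have l1: "(\<lambda>n. graph_ip ip A (approx_seq y n) (approx_seq y n)) \<longlonglongrightarrow> clos_val y y + ip y y"
    by (rule clos_val_tendsto[OF b b])
  have qr: "graph_ip ip A (approx_seq y n) (approx_seq y n) = complex_of_real (E.Q (approx_seq y n))" for n
    by (rule E.q_real) (use b approximates_in in auto)
  have ipr: "ip y y = complex_of_real (H.Q y)" by (rule H.q_real) simp
  have "(\<lambda>n. Im (graph_ip ip A (approx_seq y n) (approx_seq y n))) \<longlonglongrightarrow> Im (clos_val y y + ip y y)" by (intro tendsto_intros l1)
  then have "(\<lambda>n. 0) \<longlonglongrightarrow> Im (clos_val y y + ip y y)" using qr by simp
  then have im: "Im (clos_val y y + ip y y) = 0" using LIMSEQ_unique[OF _ tendsto_const] by metis
  have l2: "(\<lambda>n. E.Q (approx_seq y n)) \<longlonglongrightarrow> Re (clos_val y y + ip y y)"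
    using tendsto_Re[OF l1] qr by simp
  have l3: "(\<lambda>n. H.Q (approx_seq y n)) \<longlonglongrightarrow> H.Q y" using H.conv_Q_tendsto b
    unfolding approximates_def by blast
  have "H.Q y \<le> Re (clos_val y y + ip y y)"
    by (rule LIMSEQ_le[OF l3 l2]) (use H_Q_le_E_Q b approximates_in in auto)
  then show "Im (clos_val y y) = 0 \<and> 0 \<le> Re (clos_val y y)" using im ipr by simp
qed

end

sublocale pos_sa_op_on \<subseteq> Cl: positive_form_on sc ip clos_form
  by unfold_locales (rule clos_form_dd, rule clos_form_positive)

context pos_sa_op_on begin

lemma Cl_Q_eq: "Cl.F.Q v = Re (clos_val v v) + form_shift clos_form * H.Q v"
  using Cl.F_Q_eq unfolding clos_form_def by simp

lemma E_Q_diff_tendsto: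
  assumes x: "x \<in> fst A" and a: "approximates y X"
  shows "(\<lambda>m. E.Q (x - X m)) \<longlonglongrightarrow> Re (clos_val (x - y) (x - y)) + H.Q (x - y)"
proof -
  have ap: "approximates (x - y) (\<lambda>m. x - X m)" by (rule approximates_diff[OF approximates_const[OF x] a])
  have "(\<lambda>m. Re (graph_ip ip A (x - X m) (x - X m))) \<longlonglongrightarrow> Re (clos_val (x - y) (x - y) + ip (x - y) (x - y))"
    by (intro tendsto_intros clos_val_tendsto[OF ap ap])
  then show ?thesis unfolding E.Q_def H.Q_def by simp
qed

lemma approximates_Cl_conv: assumes a: "approximates y X" shows "Cl.F.conv X y"
proof -
  have XA: "X n \<in> fst A" for n using a approximates_in by auto
  have yD: "y \<in> clos_dom" using a unfolding clos_dom_def by auto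
  have XD: "X n \<in> clos_dom" for n using XA op_domain_subset_clos_dom by auto
  have c: "E.cauchy X" and h: "H.conv X y" using a unfolding approximates_def by auto
  note lim_n = E_Q_diff_tendsto[OF XA a]
  have "(\<lambda>n. Cl.F.Q (X n - y)) \<longlonglongrightarrow> 0"
    unfolding LIMSEQ_iff
  proof (intro allI impI)
    fix r :: real assume r: "r > 0"
    obtain N1 where N1: "\<And>m n. m \<ge> N1 \<Longrightarrow> n \<ge> N1 \<Longrightarrow> E.Q (X m - X n) < r / 2"
      using E.cauchy_D[OF c, of "r/2"] r by auto
    have hl: "(\<lambda>n. form_shift clos_form * H.Q (X n - y)) \<longlonglongrightarrow> form_shift clos_form * 0"
      using h unfolding H.conv_def by (intro tendsto_intros) auto
    obtain N2 where N2: "\<And>n. n \<ge> N2 \<Longrightarrow> \<bar>form_shift clos_form * H.Q (X n - y)\<bar> < r / 2"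
      using LIMSEQ_zero_D[of "\<lambda>n. form_shift clos_form * H.Q (X n - y)" "r/2"] hl r by auto
    have "norm (Cl.F.Q (X n - y) - 0) < r" if n: "n \<ge> max N1 N2" for n
    proof -
      have dv: "X n - y \<in> clos_dom" using XD yD Cl.F.Vdiff clos_form_def by auto
      have "Re (clos_val (X n - y) (X n - y)) + H.Q (X n - y) \<le> r / 2"
        by (rule LIMSEQ_le_const2[OF lim_n]) (use N1 n in \<open>auto intro!: exI[of _ N1] less_imp_le\<close>)
      moreover have "H.Q (X n - y) \<ge> 0" by (rule H.Q_nonneg) simp
      moreover have "Cl.F.Q (X n - y) \<ge> 0" using Cl.F.Q_nonneg dv clos_form_def by auto
      moreover have "form_shift clos_form * H.Q (X n - y) < r / 2" using N2[of n] n by simp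
      ultimately show ?thesis using Cl_Q_eq[of "X n - y"] by simp
    qed
    then show "\<exists>N. \<forall>n\<ge>N. norm (Cl.F.Q (X n - y) - 0) < r" by blast
  qed
  then show ?thesis unfolding Cl.F.conv_def using XD yD clos_form_def by auto
qed

lemma E_Q_le_Cl_Q: assumes v: "v \<in> fst A" shows "E.Q v \<le> Cl.F.Q v"
proof -
  have vD: "v \<in> clos_dom" using v op_domain_subset_clos_dom by auto
  have "Cl.F.Q v = Re (ip (snd A v) v) + form_shift clos_form * H.Q v" using Cl_Q_eq clos_val_op[OF v vD] by simp
  moreover have "H.Q v \<le> form_shift clos_form * H.Q v" using Cl.shift_ge_1 H.Q_nonneg[of v]
    by (simp add: mult_le_cancel_right1)
  ultimately show ?thesis using E_Q_eq by simp
qed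

lemma clos_form_closed: "closed_pos_form sc ip clos_form"
  unfolding Cl.closed_pos_form_iff_complete
proof (intro allI impI)
  fix Y assume cY: "Cl.F.cauchy Y"
  have dense: "\<exists>X. (\<forall>n. X n \<in> fst A) \<and> Cl.F.conv X y" if "y \<in> fst clos_form" for y
  proof -
    have "approximates y (approx_seq y)" using that approx_seq by (simp add: clos_form_def)
    then show ?thesis using approximates_Cl_conv approximates_in by blast
  qed
  obtain e where e: "\<And>n. e n \<in> fst A" "Cl.F.conv (\<lambda>n. e n - Y n) 0"
    using Cl.F.near_seq_exists[OF dense, of Y] Cl.F.cauchy_in[OF cY] by blast
  have "Cl.F.cauchy e" by (rule Cl.F.cauchy_if_near_cauchy[OF cY e(2)])
  then have "E.cauchy e"
    by (intro E.cauchy_if_dominated[where c=1 and P=Cl.F.Q])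
      (use e(1) E_Q_le_Cl_Q E.Vdiff Cl.F.cauchy_D in auto)
  moreover obtain l where "H.conv e l" using H.complete[OF E_cauchy_H_cauchy] calculation by blast
  ultimately have "Cl.F.conv e l" by (intro approximates_Cl_conv) (simp add: approximates_def)
  then show "\<exists>l. Cl.F.conv Y l" using Cl.F.conv_if_near_conv[OF _ e(2)] by blast
qed

lemma assoc_op_clos_form: "assoc_op sc ip clos_form = A"
proof -
  interpret Clc: closed_form_on sc ip clos_form by unfold_locales (rule clos_form_closed)
  have "represents sc ip clos_form A"
    unfolding represents_def clos_form_def fst_conv snd_conv
    using psa op_domain_subset_clos_dom clos_val_op by auto
  then show ?thesis using Cl.represents_unique[OF Clc.represents_assoc_op] by simp
qed

end

context complex_hilbert begin

lemma assoc_op_surj: assumes "pos_sa_op sc ip A"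
  shows "\<exists>T. closed_pos_form sc ip T \<and> assoc_op sc ip T = A"
proof -
  interpret pos_sa_op_on sc ip A by unfold_locales (rule assms)
  show ?thesis using clos_form_closed assoc_op_clos_form by blast
qed

end

section \<open>Bounded forms and sums of closed forms\<close>

context closed_form_on begin

lemma form_zero_zero: "snd T 0 0 = 0"
proof -
  have "snd T (sc 0 0) 0 = 0 * snd T 0 0" by (rule dd_formD(3)[OF dd]) (use F.V0 in auto)
  then show ?thesis by simp
qed

lemma bounded_form_le_H_Q:
  assumes b: "bounded_form ip T"
  shows "\<exists>C\<ge>0. \<forall>v\<in>fst T. Re (snd T v v) \<le> C * H.Q v"
proof -
  obtain C where C: "\<And>x. x \<in> fst T \<Longrightarrow> nrm ip x = 1 \<Longrightarrow> Re (snd T x x) \<le> C"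
    using b unfolding bounded_form_def by blast
  define C0 where "C0 = max C 0"
  have "Re (snd T v v) \<le> C0 * H.Q v" if v: "v \<in> fst T" for v
  proof (cases "v = 0")
    case True then show ?thesis using form_zero_zero by simp
  next
    case False
    have qv: "H.Q v > 0" using H.Q_eq0[of v] H.Q_nonneg[of v] False by auto
    define r where "r = sqrt (H.Q v)"
    have r0: "r > 0" using qv r_def by simp
    define u where "u = sc (complex_of_real (1 / r)) v"
    have uD: "u \<in> fst T" using u_def v F.Vsc by auto
    have "H.Q u = (1 / r)^2 * H.Q v" unfolding u_def using H.Q_sc[of v] by (simp add: norm_divide r0 abs_of_pos)
    also have "\<dots> = 1" unfolding r_def using qv by (simp add: power_divide)
    finally have nu: "nrm ip u = 1" using nrm_eq_sqrt_Q by simp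
    define c where "c = complex_of_real (1 / r)"
    have e1: "snd T (sc c v) (sc c v) = c * snd T v (sc c v)" by (rule dd_formD(3)[OF dd]) (use v F.Vsc in auto)
    have e2: "snd T v (sc c v) = cnj c * snd T v v" by (rule dd_formD(5)[OF dd]) (use v in auto)
    have tu: "snd T u u = complex_of_real (1 / r) * (cnj (complex_of_real (1 / r)) * snd T v v)"
      unfolding u_def using e1 e2 c_def by simp
    have "Re (snd T u u) = (1 / r)^2 * Re (snd T v v)" using tu by (simp add: power2_eq_square)
    then have "(1 / r)^2 * Re (snd T v v) \<le> C" using C[OF uD nu] by simp
    then have "Re (snd T v v) \<le> C * r^2" using r0 by (simp add: field_simps power2_eq_square)
    also have "\<dots> = C * H.Q v" unfolding r_def using H.Q_nonneg[of v] by simp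
    also have "\<dots> \<le> C0 * H.Q v" unfolding C0_def using H.Q_nonneg[of v] by (simp add: mult_right_mono)
    finally show ?thesis .
  qed
  moreover have "C0 \<ge> 0" unfolding C0_def by simp
  ultimately show ?thesis by blast
qed

lemma bounded_form_F_Q_le_H_Q:
  assumes b: "bounded_form ip T"
  shows "\<exists>c>0. \<forall>v\<in>fst T. F.Q v \<le> c * H.Q v"
proof -
  obtain C where C: "C \<ge> 0" "\<And>v. v \<in> fst T \<Longrightarrow> Re (snd T v v) \<le> C * H.Q v"
    using bounded_form_le_H_Q[OF b] by blast
  have "F.Q v \<le> (C + form_shift T) * H.Q v" if "v \<in> fst T" for v
    using F_Q_eq[of v] C(2)[OF that] by (simp add: algebra_simps)
  moreover have "C + form_shift T > 0" using C shift_ge_1 by simp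
  ultimately show ?thesis by blast
qed

lemma bounded_form_domain: assumes b: "bounded_form ip T" shows "fst T = UNIV"
proof -
  obtain c where c: "c > 0" "\<And>v. v \<in> fst T \<Longrightarrow> F.Q v \<le> c * H.Q v"
    using bounded_form_F_Q_le_H_Q[OF b] by blast
  have "y \<in> fst T" for y
  proof -
    obtain Y where Y: "\<And>n. Y n \<in> fst T" "H.conv Y y" using dense_subspace_seq[OF dd_formD(1)[OF dd]] by blast
    have "F.cauchy Y"
    proof (rule F.cauchy_if_dominated[where c=c and P=H.Q])
      show "F.Q (Y m - Y n) \<le> c * H.Q (Y m - Y n)" for m n using c(2) F.Vdiff Y(1) by auto
    qed (use Y(1) c(1) H.cauchy_D[OF H.conv_cauchy[OF Y(2)]] in auto)
    then obtain l where l: "F.conv Y l" using F.complete by blast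
    have "l = y" using H.conv_unique[OF F_conv_H_conv[OF l] Y(2)] .
    then show ?thesis using l F.conv_in by auto
  qed
  then show ?thesis by auto
qed

lemma bounded_form_H_conv_F_conv:
  assumes b: "bounded_form ip T" and h: "H.conv X l"
  shows "F.conv X l"
proof -
  obtain c where c: "c > 0" "\<And>v. v \<in> fst T \<Longrightarrow> F.Q v \<le> c * H.Q v"
    using bounded_form_F_Q_le_H_Q[OF b] by blast
  have U: "fst T = UNIV" by (rule bounded_form_domain[OF b])
  have "(\<lambda>n. c * H.Q (X n - l)) \<longlonglongrightarrow> c * 0" using h unfolding H.conv_def
    by (intro tendsto_intros) auto
  then show ?thesis by (intro F.conv_if_dominated[where g="\<lambda>n. c * H.Q (X n - l)"]) (use c U in auto)
qed

end

locale closed_form_pair = complex_hilbert +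
  fixes T S
  assumes cT: "closed_pos_form sc ip T" and cS: "closed_pos_form sc ip S"
    and dsum: "dense_subspace sc ip (fst T \<inter> fst S)"

sublocale closed_form_pair \<subseteq> A: closed_form_on sc ip T
  by (rule closed_form_onI[OF cT])

sublocale closed_form_pair \<subseteq> B: closed_form_on sc ip S
  by (rule closed_form_onI[OF cS])

context closed_form_pair begin

lemma form_sum_dd: "dd_form sc ip (form_sum T S)"
proof -
  note dT = dd_formD[OF A.dd] and dS = dd_formD[OF B.dd]
  note s = dense_subspaceD[OF dsum]
  show ?thesis unfolding dd_form_def form_sum_def case_prod_conv fst_conv snd_conv
  proof (intro conjI ballI allI impI)
    show "dense_subspace sc ip (fst T \<inter> fst S)" by (rule dsum)
    fix x y z a
    show "(if x + y \<in> fst T \<inter> fst S \<and> z \<in> fst T \<inter> fst S then snd T (x + y) z + snd S (x + y) z else 0) =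
      (if x \<in> fst T \<inter> fst S \<and> z \<in> fst T \<inter> fst S then snd T x z + snd S x z else 0) +
      (if y \<in> fst T \<inter> fst S \<and> z \<in> fst T \<inter> fst S then snd T y z + snd S y z else 0)"
      if "x \<in> fst T \<inter> fst S" "y \<in> fst T \<inter> fst S" "z \<in> fst T \<inter> fst S"
      using that s dT(2) dS(2) by (simp add: algebra_simps)
    show "(if sc a x \<in> fst T \<inter> fst S \<and> y \<in> fst T \<inter> fst S then snd T (sc a x) y + snd S (sc a x) y else 0) =
      a * (if x \<in> fst T \<inter> fst S \<and> y \<in> fst T \<inter> fst S then snd T x y + snd S x y else 0)"
      if "x \<in> fst T \<inter> fst S" "y \<in> fst T \<inter> fst S"
      using that s dT(3) dS(3) by (simp add: algebra_simps)
    show "(if x \<in> fst T \<inter> fst S \<and> y + z \<in> fst T \<inter> fst S then snd T x (y + z) + snd S x (y + z) else 0) =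
      (if x \<in> fst T \<inter> fst S \<and> y \<in> fst T \<inter> fst S then snd T x y + snd S x y else 0) +
      (if x \<in> fst T \<inter> fst S \<and> z \<in> fst T \<inter> fst S then snd T x z + snd S x z else 0)"
      if "x \<in> fst T \<inter> fst S" "y \<in> fst T \<inter> fst S" "z \<in> fst T \<inter> fst S"
      using that s dT(4) dS(4) by (simp add: algebra_simps)
    show "(if x \<in> fst T \<inter> fst S \<and> sc a y \<in> fst T \<inter> fst S then snd T x (sc a y) + snd S x (sc a y) else 0) =
      cnj a * (if x \<in> fst T \<inter> fst S \<and> y \<in> fst T \<inter> fst S then snd T x y + snd S x y else 0)"
      if "x \<in> fst T \<inter> fst S" "y \<in> fst T \<inter> fst S"
      using that s dT(5) dS(5) by (simp add: algebra_simps)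
    show "(if x \<in> fst T \<inter> fst S \<and> y \<in> fst T \<inter> fst S then snd T x y + snd S x y else 0) = 0"
      if "x \<notin> fst T \<inter> fst S \<or> y \<notin> fst T \<inter> fst S" using that by auto
  qed
qed

lemma form_sum_positive: "positive_form (form_sum T S)"
  unfolding positive_form_def using form_sum_fst[of T S] form_sum_snd[of _ T S] A.pos B.pos unfolding positive_form_def by auto

end

sublocale closed_form_pair \<subseteq> U: positive_form_on sc ip "form_sum T S"
  by unfold_locales (rule form_sum_dd, rule form_sum_positive)

context closed_form_pair begin

lemma U_Q_eq:
  "v \<in> fst T \<inter> fst S \<Longrightarrow> U.F.Q v = Re (snd T v v) + Re (snd S v v) + form_shift (form_sum T S) * H.Q v"
  using U.F_Q_eq form_sum_snd[of v T S v] by simp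

lemma T_Q_le_U_Q:
  assumes v: "v \<in> fst T \<inter> fst S"
  shows "A.F.Q v \<le> form_shift T * U.F.Q v"
  using summand_le_scaled_sum[of "Re (snd T v v)" "Re (snd S v v)" "H.Q v" "form_shift T" "form_shift (form_sum T S)"]
    v A.form_diag_nonneg B.form_diag_nonneg H.Q_nonneg A.shift_ge_1 U.shift_ge_1
  by (simp add: A.F_Q_eq U_Q_eq)

lemma S_Q_le_U_Q:
  assumes v: "v \<in> fst T \<inter> fst S"
  shows "B.F.Q v \<le> form_shift S * U.F.Q v"
  using summand_le_scaled_sum[of "Re (snd S v v)" "Re (snd T v v)" "H.Q v" "form_shift S" "form_shift (form_sum T S)"]
    v A.form_diag_nonneg B.form_diag_nonneg H.Q_nonneg B.shift_ge_1 U.shift_ge_1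
  by (simp add: B.F_Q_eq U_Q_eq add.commute add.left_commute)

lemma U_Q_le:
  assumes v: "v \<in> fst T \<inter> fst S"
  shows "U.F.Q v \<le> form_shift (form_sum T S) * (A.F.Q v + B.F.Q v)"
proof -
  have t: "Re (snd T v v) \<ge> 0" "Re (snd S v v) \<ge> 0" using A.form_diag_nonneg B.form_diag_nonneg v by auto
  have h: "H.Q v \<ge> 0" by (rule H.Q_nonneg) simp
  have k: "form_shift T \<ge> 1" "form_shift S \<ge> 1" "form_shift (form_sum T S) \<ge> 1"
    using A.shift_ge_1 B.shift_ge_1 U.shift_ge_1 by auto
  have "U.F.Q v = Re (snd T v v) + Re (snd S v v) + form_shift (form_sum T S) * H.Q v" using U_Q_eq[OF v] .
  also have "\<dots> \<le> form_shift (form_sum T S) * (Re (snd T v v) + Re (snd S v v)) + form_shift (form_sum T S) * (form_shift T * H.Q v)"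
  proof (rule add_mono)
    show "Re (snd T v v) + Re (snd S v v) \<le> form_shift (form_sum T S) * (Re (snd T v v) + Re (snd S v v))"
      using t k by (simp add: mult_le_cancel_right1)
    show "form_shift (form_sum T S) * H.Q v \<le> form_shift (form_sum T S) * (form_shift T * H.Q v)"
      using k h by (intro mult_left_mono) (auto simp: mult_le_cancel_right1)
  qed
  also have "\<dots> \<le> form_shift (form_sum T S) * (A.F.Q v + B.F.Q v)"
  proof -
    have le0: "Re (snd T v v) + Re (snd S v v) + form_shift T * H.Q v \<le> A.F.Q v + B.F.Q v"
      using A.F_Q_eq[of v] B.F_Q_eq[of v] k h by (simp add: mult_nonneg_nonneg)
    have "form_shift (form_sum T S) * (Re (snd T v v) + Re (snd S v v) + form_shift T * H.Q v) \<le> form_shift (form_sum T S) * (A.F.Q v + B.F.Q v)"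
      using le0 k by (intro mult_left_mono) auto
    then show ?thesis by (simp add: algebra_simps)
  qed
  finally show ?thesis .
qed

lemma form_sum_closed_aux: "closed_pos_form sc ip (form_sum T S)"
  unfolding U.closed_pos_form_iff_complete
proof (intro allI impI)
  fix X assume cX: "U.F.cauchy X"
  have XI: "X n \<in> fst T \<inter> fst S" for n using cX U.F.cauchy_in form_sum_fst[of T S] by auto
  have dI: "X m - X n \<in> fst T \<inter> fst S" for m n using U.F.Vdiff cX U.F.cauchy_in form_sum_fst[of T S] by auto
  have "A.F.cauchy X"
    by (rule A.F.cauchy_if_dominated[where c="form_shift T" and P=U.F.Q])
      (use XI T_Q_le_U_Q[OF dI] A.shift_ge_1 U.F.cauchy_D[OF cX] in auto)
  then obtain l where l: "A.F.conv X l" using A.F.complete by blast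
  have "B.F.cauchy X"
    by (rule B.F.cauchy_if_dominated[where c="form_shift S" and P=U.F.Q])
      (use XI S_Q_le_U_Q[OF dI] B.shift_ge_1 U.F.cauchy_D[OF cX] in auto)
  then obtain l' where l': "B.F.conv X l'" using B.F.complete by blast
  have "l' = l" using H.conv_unique[OF B.F_conv_H_conv[OF l'] A.F_conv_H_conv[OF l]] .
  then have lI: "l \<in> fst T \<inter> fst S" using l l' A.F.conv_in B.F.conv_in by auto
  have "(\<lambda>n. form_shift (form_sum T S) * (A.F.Q (X n - l) + B.F.Q (X n - l))) \<longlonglongrightarrow> form_shift (form_sum T S) * (0 + 0)"
    using l l' \<open>l' = l\<close> unfolding A.F.conv_def B.F.conv_def by (intro tendsto_intros) auto
  then have "U.F.conv X l"
    by (intro U.F.conv_if_dominated[where g="\<lambda>n. form_shift (form_sum T S) * (A.F.Q (X n - l) + B.F.Q (X n - l))"])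
      (use XI lI U_Q_le U.F.Vdiff form_sum_fst[of T S] in auto)
  then show "\<exists>l. U.F.conv X l" by blast
qed

end

context complex_hilbert begin

lemma assoc_op_pos_sa:
  "closed_pos_form sc ip T \<Longrightarrow> pos_sa_op sc ip (assoc_op sc ip T)"
proof -
  assume c: "closed_pos_form sc ip T"
  interpret C: closed_form_on sc ip T by (rule closed_form_onI[OF c])
  show ?thesis using C.represents_assoc_op unfolding represents_def by simp
qed

lemma form_of_props: assumes "pos_sa_op sc ip A"
  shows "closed_pos_form sc ip (form_of sc ip A) \<and> assoc_op sc ip (form_of sc ip A) = A"
proof -
  have "\<exists>!T. closed_pos_form sc ip T \<and> assoc_op sc ip T = A"
    using assoc_op_surj[OF assms] assoc_op_inj by blast
  then show ?thesis unfolding form_of_def by (rule theI')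
qed

lemma form_of_assoc_op:
  assumes "closed_pos_form sc ip T"
  shows "form_of sc ip (assoc_op sc ip T) = T"
  unfolding form_of_def using assms assoc_op_inj by (intro the_equality) auto

lemma bounded_closed_form_domain:
  "closed_pos_form sc ip T \<Longrightarrow> bounded_form ip T \<Longrightarrow> fst T = UNIV"
proof -
  assume c: "closed_pos_form sc ip T" and b: "bounded_form ip T"
  interpret C: closed_form_on sc ip T by (rule closed_form_onI[OF c])
  show ?thesis by (rule C.bounded_form_domain[OF b])
qed

lemma oplus_defined_dense: assumes cT: "closed_pos_form sc ip T" and cS: "closed_pos_form sc ip S"
  and d: "form_oplus_defined ip T S" shows "dense_subspace sc ip (fst T \<inter> fst S)"
proof -
  have dT: "dense_subspace sc ip (fst T)" and dS: "dense_subspace sc ip (fst S)"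
    using cT cS unfolding closed_pos_form_def dd_form_def by (auto simp: case_prod_beta)
  show ?thesis using d bounded_closed_form_domain[OF cT] bounded_closed_form_domain[OF cS] dT dS
    unfolding form_oplus_defined_def by auto
qed

lemma form_sum_closed: assumes cT: "closed_pos_form sc ip T" and cS: "closed_pos_form sc ip S"
  and d: "form_oplus_defined ip T S" shows "closed_pos_form sc ip (form_sum T S)"
proof -
  interpret closed_form_pair sc ip T S by unfold_locales (rule cT, rule cS, rule oplus_defined_dense[OF cT cS d])
  show ?thesis by (rule form_sum_closed_aux)
qed

end

section \<open>The generalized effect algebra\<close>

lemma form_sum_commute: "form_sum T S = form_sum S T"
  unfolding form_sum_def by (auto simp: fun_eq_iff algebra_simps)

lemma form_sum_assoc: "form_sum (form_sum T1 T2) T3 = form_sum T1 (form_sum T2 T3)"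
  unfolding form_sum_def by (auto simp: fun_eq_iff algebra_simps)

lemma form_oplus_defined_commute: "form_oplus_defined ip T S = form_oplus_defined ip S T"
  unfolding form_oplus_defined_def by auto

lemma bounded_form_sum:
  "bounded_form ip T \<Longrightarrow> bounded_form ip S \<Longrightarrow> bounded_form ip (form_sum T S)"
proof -
  assume "bounded_form ip T" "bounded_form ip S"
  then obtain C1 C2 where C1: "\<And>x. x \<in> fst T \<Longrightarrow> nrm ip x = 1 \<Longrightarrow> Re (snd T x x) \<le> C1"
    and C2: "\<And>x. x \<in> fst S \<Longrightarrow> nrm ip x = 1 \<Longrightarrow> Re (snd S x x) \<le> C2"
    unfolding bounded_form_def by blast
  have "\<forall>x\<in>fst (form_sum T S). nrm ip x = 1 \<longrightarrow> Re (snd (form_sum T S) x x) \<le> C1 + C2"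
    unfolding form_sum_def using C1 C2 by (auto intro: add_mono)
  then show ?thesis unfolding bounded_form_def by blast
qed

lemma bounded_form_summand: assumes p: "positive_form S" and b: "bounded_form ip (form_sum T S)" and sub: "fst T \<subseteq> fst S"
  shows "bounded_form ip T"
proof -
  obtain C where C: "\<And>x. x \<in> fst (form_sum T S) \<Longrightarrow> nrm ip x = 1 \<Longrightarrow> Re (snd (form_sum T S) x x) \<le> C"
    using b unfolding bounded_form_def by blast
  have "Re (snd T x x) \<le> C" if "x \<in> fst T" "nrm ip x = 1" for x
  proof -
    have xi: "x \<in> fst T \<inter> fst S" using that sub by auto
    have "Re (snd (form_sum T S) x x) = Re (snd T x x) + Re (snd S x x)" unfolding form_sum_def using xi by simp
    moreover have "Re (snd S x x) \<ge> 0" using p xi unfolding positive_form_def by auto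
    ultimately show ?thesis using C[of x] xi that unfolding form_sum_def by auto
  qed
  then show ?thesis unfolding bounded_form_def by blast
qed

lemma bounded_form_restrict: assumes b: "bounded_form ip T" and sub: "fst S \<subseteq> fst T"
  and eq: "\<And>a. a \<in> fst S \<Longrightarrow> snd S a a = snd T a a" shows "bounded_form ip S"
  using b sub eq unfolding bounded_form_def by (metis subsetD)

context complex_hilbert begin

lemma bounded_form_sum_imp_summands:
  assumes c1: "closed_pos_form sc ip T1" and c2: "closed_pos_form sc ip T2"
    and d12: "form_oplus_defined ip T1 T2" and b: "bounded_form ip (form_sum T1 T2)"
  shows "bounded_form ip T1 \<and> bounded_form ip T2"
proof -
  have s1: "bounded_form ip T1" if "fst T1 \<subseteq> fst T2"
    using bounded_form_summand[OF closed_pos_form_positive[OF c2] b that] .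
  have s2: "bounded_form ip T2" if "fst T2 \<subseteq> fst T1"
    using bounded_form_summand[OF closed_pos_form_positive[OF c1], where T=T2] b that
    by (simp add: form_sum_commute)
  show ?thesis
    using d12 s1 s2 bounded_closed_form_domain[OF c1] bounded_closed_form_domain[OF c2]
    unfolding form_oplus_defined_def by blast
qed

lemma definedness_assoc_imp:
  fixes A B C :: "'a set"
  assumes "b1 \<Longrightarrow> A = UNIV" "b2 \<Longrightarrow> B = UNIV" "b3 \<Longrightarrow> C = UNIV" "b12 \<Longrightarrow> b1 \<and> b2" "b2 \<Longrightarrow> b3 \<Longrightarrow> b23"
    and "b1 \<or> b2 \<or> A = B" "b12 \<or> b3 \<or> A \<inter> B = C"
  shows "(b2 \<or> b3 \<or> B = C) \<and> (b1 \<or> b23 \<or> A = B \<inter> C)"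
  using assms by (metis Int_UNIV_left Int_UNIV_right Int_absorb)

lemma form_oplus_defined_assoc_imp:
  assumes c1: "closed_pos_form sc ip T1" and c2: "closed_pos_form sc ip T2" and c3: "closed_pos_form sc ip T3"
    and d12: "form_oplus_defined ip T1 T2" and d123: "form_oplus_defined ip (form_sum T1 T2) T3"
  shows "form_oplus_defined ip T2 T3 \<and> form_oplus_defined ip T1 (form_sum T2 T3)"
  using definedness_assoc_imp[of "bounded_form ip T1" "fst T1" "bounded_form ip T2" "fst T2"
      "bounded_form ip T3" "fst T3" "bounded_form ip (form_sum T1 T2)" "bounded_form ip (form_sum T2 T3)"]
    bounded_closed_form_domain[OF c1] bounded_closed_form_domain[OF c2] bounded_closed_form_domain[OF c3]
    bounded_form_sum_imp_summands[OF c1 c2 d12] bounded_form_sum[of ip T2 T3] d12 d123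
  unfolding form_oplus_defined_def form_sum_fst by blast

lemma form_oplus_defined_assoc:
  assumes c1: "closed_pos_form sc ip T1" and c2: "closed_pos_form sc ip T2" and c3: "closed_pos_form sc ip T3"
  shows "(form_oplus_defined ip T1 T2 \<and> form_oplus_defined ip (form_sum T1 T2) T3) \<longleftrightarrow>
         (form_oplus_defined ip T2 T3 \<and> form_oplus_defined ip T1 (form_sum T2 T3))"
proof
  assume "form_oplus_defined ip T1 T2 \<and> form_oplus_defined ip (form_sum T1 T2) T3"
  then show "form_oplus_defined ip T2 T3 \<and> form_oplus_defined ip T1 (form_sum T2 T3)"
    using form_oplus_defined_assoc_imp[OF c1 c2 c3] by blast
next
  assume a: "form_oplus_defined ip T2 T3 \<and> form_oplus_defined ip T1 (form_sum T2 T3)"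
  have "form_oplus_defined ip T3 T2 \<and> form_oplus_defined ip (form_sum T3 T2) T1"
    using a form_oplus_defined_commute form_sum_commute by metis
  then have "form_oplus_defined ip T2 T1 \<and> form_oplus_defined ip T3 (form_sum T2 T1)"
    using form_oplus_defined_assoc_imp[OF c3 c2 c1] by blast
  then show "form_oplus_defined ip T1 T2 \<and> form_oplus_defined ip (form_sum T1 T2) T3"
    using form_oplus_defined_commute form_sum_commute by metis
qed

end

definition zero_form :: "'h form" where "zero_form = (UNIV, \<lambda>_ _. 0)"

lemma bounded_zero_form:
  "bounded_form ip zero_form" unfolding bounded_form_def zero_form_def by auto

context complex_hilbert begin

lemma dense_subspace_UNIV: "dense_subspace sc ip UNIV"
  unfolding dense_subspace_def
proof (intro conjI ballI allI impI)
  fix x and e :: real assume e: "e > 0"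
  have "nrm ip (x - x) = 0" using nrm_eq_sqrt_Q H.Q_zero by simp
  then show "\<exists>y\<in>UNIV. nrm ip (x - y) < e" using e by (intro bexI[of _ x]) auto
qed auto

lemma pos_sa_zero_op: "pos_sa_op sc ip zero_op"
  unfolding pos_sa_op_def zero_op_def case_prod_conv
proof (intro conjI ballI allI impI)
  show "dense_subspace sc ip UNIV" by (rule dense_subspace_UNIV)
  show "{y. \<exists>z. \<forall>x\<in>UNIV. ip 0 y = ip x z} = UNIV" by (auto intro!: exI[of _ 0])
qed auto

lemma closed_zero_form: "closed_pos_form sc ip zero_form"
proof -
  have dd: "dd_form sc ip zero_form" unfolding dd_form_def zero_form_def case_prod_conv
    using dense_subspace_UNIV by auto
  have pos: "positive_form zero_form" unfolding positive_form_def zero_form_def by simp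
  interpret D: positive_form_on sc ip zero_form by unfold_locales (rule dd, rule pos)
  show ?thesis unfolding D.closed_pos_form_iff_complete
  proof (intro allI impI)
    fix X assume c: "D.F.cauchy X"
    obtain l where l: "H.conv X l" using H.complete[OF D.F_cauchy_H_cauchy[OF c]] by blast
    have "(\<lambda>n. form_shift zero_form * H.Q (X n - l)) \<longlonglongrightarrow> form_shift zero_form * 0" using l
      unfolding H.conv_def by (intro tendsto_intros) auto
    moreover have "D.F.Q v = form_shift zero_form * H.Q v" for v using D.F_Q_eq unfolding zero_form_def by simp
    ultimately have lim: "(\<lambda>n. D.F.Q (X n - l)) \<longlonglongrightarrow> 0" by simp
    have "D.F.conv X l" unfolding D.F.conv_def using lim by (simp add: zero_form_def)
    then show "\<exists>l. D.F.conv X l" by blast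
  qed
qed

lemma assoc_op_zero_form: "assoc_op sc ip zero_form = zero_op"
proof -
  interpret C: closed_form_on sc ip zero_form by (rule closed_form_onI[OF closed_zero_form])
  have "represents sc ip zero_form zero_op" unfolding represents_def using pos_sa_zero_op
    by (simp add: zero_form_def zero_op_def H.q_zero_left)
  then show ?thesis using C.represents_unique[OF C.represents_assoc_op] by simp
qed

lemma form_of_zero_op: "form_of sc ip zero_op = zero_form"
  using form_of_assoc_op[OF closed_zero_form] assoc_op_zero_form by simp

lemma form_sum_zero_form: assumes c: "closed_pos_form sc ip T" shows "form_sum T zero_form = T"
proof -
  have z: "\<And>x y. x \<notin> fst T \<or> y \<notin> fst T \<Longrightarrow> snd T x y = 0"
    using dd_formD(6) c unfolding closed_pos_form_def by blast
  have "snd (form_sum T zero_form) = snd T" unfolding form_sum_def zero_form_def using z by (auto simp: fun_eq_iff)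
  moreover have "fst (form_sum T zero_form) = fst T" unfolding form_sum_def zero_form_def by simp
  ultimately show ?thesis by (simp add: prod_eq_iff)
qed

lemma bounded_forms_eq: assumes cT: "closed_pos_form sc ip T" and cS: "closed_pos_form sc ip S"
  and bT: "bounded_form ip T" and bS: "bounded_form ip S" and ds: "dense_subspace sc ip D1"
  and eq: "\<And>a b. a \<in> D1 \<Longrightarrow> b \<in> D1 \<Longrightarrow> snd T a b = snd S a b"
  shows "T = S"
proof -
  interpret A: closed_form_on sc ip T by (rule closed_form_onI[OF cT])
  interpret B: closed_form_on sc ip S by (rule closed_form_onI[OF cS])
  have uT: "fst T = UNIV" and uS: "fst S = UNIV" using A.bounded_form_domain[OF bT] B.bounded_form_domain[OF bS] by auto
  have "snd T a b = snd S a b" for a b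
  proof -
    obtain X where X: "\<And>n. X n \<in> D1" "H.conv X a" using dense_subspace_seq[OF ds] by blast
    obtain W where W: "\<And>n. W n \<in> D1" "H.conv W b" using dense_subspace_seq[OF ds] by blast
    have l1: "(\<lambda>n. snd T (X n) (W n)) \<longlonglongrightarrow> snd T a b"
      by (rule A.form_tendsto[OF A.bounded_form_H_conv_F_conv[OF bT X(2)] A.bounded_form_H_conv_F_conv[OF bT W(2)]])
    have l2: "(\<lambda>n. snd S (X n) (W n)) \<longlonglongrightarrow> snd S a b"
      by (rule B.form_tendsto[OF B.bounded_form_H_conv_F_conv[OF bS X(2)] B.bounded_form_H_conv_F_conv[OF bS W(2)]])
    have "(\<lambda>n. snd T (X n) (W n)) = (\<lambda>n. snd S (X n) (W n))" using eq X(1) W(1) by auto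
    then show ?thesis using l1 l2 LIMSEQ_unique by metis
  qed
  then have "snd T = snd S" by (intro ext)
  then show ?thesis using uT uS by (simp add: prod_eq_iff)
qed

lemma form_sum_cancel:
  assumes c1: "closed_pos_form sc ip T1" and c2: "closed_pos_form sc ip T2" and c3: "closed_pos_form sc ip T3"
    and d12: "form_oplus_defined ip T1 T2" and d13: "form_oplus_defined ip T1 T3"
    and eq: "form_sum T1 T2 = form_sum T1 T3"
  shows "T2 = T3"
proof -
  have E1: "fst T1 \<inter> fst T2 = fst T1 \<inter> fst T3" using arg_cong[OF eq, of fst] unfolding form_sum_def by simp
  have E2: "snd T2 a b = snd T3 a b" if ab: "a \<in> fst T1 \<inter> fst T2" "b \<in> fst T1 \<inter> fst T2" for a b
  proof -
    have "snd (form_sum T1 T2) a b = snd (form_sum T1 T3) a b" using eq by simp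
    then show ?thesis unfolding form_sum_def using ab E1 by simp
  qed
  have z2: "\<And>a b. a \<notin> fst T2 \<or> b \<notin> fst T2 \<Longrightarrow> snd T2 a b = 0"
    using dd_formD(6)[OF closed_pos_form_dd[OF c2]] by blast
  have z3: "\<And>a b. a \<notin> fst T3 \<or> b \<notin> fst T3 \<Longrightarrow> snd T3 a b = 0"
    using dd_formD(6)[OF closed_pos_form_dd[OF c3]] by blast
  have u1: "bounded_form ip T1 \<Longrightarrow> fst T1 = UNIV" using bounded_closed_form_domain[OF c1] by blast
  have u2: "bounded_form ip T2 \<Longrightarrow> fst T2 = UNIV" using bounded_closed_form_domain[OF c2] by blast
  have u3: "bounded_form ip T3 \<Longrightarrow> fst T3 = UNIV" using bounded_closed_form_domain[OF c3] by blast
  have fin: "T2 = T3" if f: "fst T2 = fst T3" "fst T2 \<subseteq> fst T1"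
  proof -
    have "snd T2 a b = snd T3 a b" for a b
    proof (cases "a \<in> fst T2 \<and> b \<in> fst T2")
      case True then show ?thesis using E2 f by auto
    next
      case False then show ?thesis using z2 z3 f by auto
    qed
    then have "snd T2 = snd T3" by (intro ext)
    then show ?thesis using f by (simp add: prod_eq_iff)
  qed
  have bb: "T2 = T3" if b2: "bounded_form ip T2" and b3: "bounded_form ip T3"
  proof (rule bounded_forms_eq[OF c2 c3 b2 b3 dd_formD(1)[OF closed_pos_form_dd[OF c1]]])
    fix a b assume "a \<in> fst T1" "b \<in> fst T1"
    then show "snd T2 a b = snd T3 a b" using E2 u2[OF b2] by auto
  qed
  \<comment> \<open>a bounded summand forces the other one to be bounded, unless \<open>T1\<close> is\<close>
  have b23: "bounded_form ip T3" if b2: "bounded_form ip T2" and D: "fst T1 = fst T3"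
  proof (rule bounded_form_restrict[OF b2])
    show "fst T3 \<subseteq> fst T2" using u2[OF b2] by simp
    show "snd T3 x x = snd T2 x x" if "x \<in> fst T3" for x using that E2 D u2[OF b2] by simp
  qed
  have b32: "bounded_form ip T2" if b3: "bounded_form ip T3" and D: "fst T1 = fst T2"
  proof (rule bounded_form_restrict[OF b3])
    show "fst T2 \<subseteq> fst T3" using u3[OF b3] by simp
    show "snd T2 x x = snd T3 x x" if "x \<in> fst T2" for x using that E2 D by simp
  qed
  show ?thesis
  proof (cases "bounded_form ip T1")
    case True
    then show ?thesis using u1 E1 fin by auto
  next
    case False
    then have "bounded_form ip T2 \<or> fst T1 = fst T2" "bounded_form ip T3 \<or> fst T1 = fst T3"
      using d12 d13 unfolding form_oplus_defined_def by auto
    then show ?thesis using bb b23 b32 fin by auto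
  qed
qed

lemma form_sum_eq_zero_form:
  assumes c1: "closed_pos_form sc ip T1" and c2: "closed_pos_form sc ip T2"
    and eq: "form_sum T1 T2 = zero_form"
  shows "T1 = zero_form \<and> T2 = zero_form"
proof -
  have U: "fst T1 \<inter> fst T2 = UNIV" using arg_cong[OF eq, of fst] unfolding form_sum_def zero_form_def by simp
  then have U1: "fst T1 = UNIV" and U2: "fst T2 = UNIV" by auto
  have s: "snd T1 a b + snd T2 a b = 0" for a b
  proof -
    have "snd (form_sum T1 T2) a b = snd zero_form a b" using eq by simp
    then show ?thesis unfolding form_sum_def zero_form_def using U by simp
  qed
  have p1: "Im (snd T1 a a) = 0 \<and> Re (snd T1 a a) \<ge> 0" for a using closed_pos_form_positive[OF c1] U1
    unfolding positive_form_def by auto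
  have p2: "Im (snd T2 a a) = 0 \<and> Re (snd T2 a a) \<ge> 0" for a using closed_pos_form_positive[OF c2] U2
    unfolding positive_form_def by auto
  have d1: "snd T1 a a = 0" for a
  proof -
    have "Re (snd T1 a a) + Re (snd T2 a a) = 0" using s[of a a] by (metis plus_complex.sel(1) zero_complex.sel(1))
    then have "Re (snd T1 a a) = 0" using p1[of a] p2[of a] by simp
    then show ?thesis using p1[of a] by (simp add: complex_eq_iff)
  qed
  have d2: "snd T2 a a = 0" for a using s[of a a] d1[of a] by simp
  have t1: "snd T1 a b = 0" for a b by (rule form_eq_zero_if_diag_zero[OF closed_pos_form_dd[OF c1] d1]) (use U1 in auto)
  have t2: "snd T2 a b = 0" for a b by (rule form_eq_zero_if_diag_zero[OF closed_pos_form_dd[OF c2] d2]) (use U2 in auto)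
  have "snd T1 = (\<lambda>_ _. 0)" "snd T2 = (\<lambda>_ _. 0)" using t1 t2 by (auto simp: fun_eq_iff)
  then show ?thesis using U1 U2 unfolding zero_form_def by (simp add: prod_eq_iff)
qed

lemma closed_form_of: "x \<in> SA sc ip \<Longrightarrow> closed_pos_form sc ip (form_of sc ip x)"
  unfolding SA_def using form_of_props by blast
lemma assoc_op_form_of: "x \<in> SA sc ip \<Longrightarrow> assoc_op sc ip (form_of sc ip x) = x"
  unfolding SA_def using form_of_props by blast

lemma sa_oplus_commute: "sa_oplus sc ip x y = sa_oplus sc ip y x"
  unfolding sa_oplus_def using form_oplus_defined_commute form_sum_commute by metis

lemma sa_oplus_bind: assumes x: "x \<in> SA sc ip" and y: "y \<in> SA sc ip" and u: "u \<in> SA sc ip"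
  shows "Option.bind (sa_oplus sc ip x y) (\<lambda>v. sa_oplus sc ip v u) =
    (if form_oplus_defined ip (form_of sc ip x) (form_of sc ip y) \<and>
        form_oplus_defined ip (form_sum (form_of sc ip x) (form_of sc ip y)) (form_of sc ip u)
     then Some (assoc_op sc ip (form_sum (form_sum (form_of sc ip x) (form_of sc ip y)) (form_of sc ip u)))
     else None)"
proof (cases "form_oplus_defined ip (form_of sc ip x) (form_of sc ip y)")
  case True
  have c: "closed_pos_form sc ip (form_sum (form_of sc ip x) (form_of sc ip y))"
    by (rule form_sum_closed[OF closed_form_of[OF x] closed_form_of[OF y] True])
  show ?thesis using True form_of_assoc_op[OF c] unfolding sa_oplus_def by simp
next
  case False
  then show ?thesis unfolding sa_oplus_def by simp
qed

lemma sa_oplus_eq_zero_op: assumes x: "x \<in> SA sc ip" and y: "y \<in> SA sc ip" and h: "sa_oplus sc ip x y = Some zero_op"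
  shows "x = zero_op \<and> y = zero_op"
proof -
  let ?T1 = "form_of sc ip x" and ?T2 = "form_of sc ip y"
  have d12: "form_oplus_defined ip ?T1 ?T2" using h unfolding sa_oplus_def by (auto split: if_splits)
  have e: "assoc_op sc ip (form_sum ?T1 ?T2) = assoc_op sc ip zero_form"
    using h d12 assoc_op_zero_form unfolding sa_oplus_def by simp
  have "form_sum ?T1 ?T2 = zero_form"
    by (rule assoc_op_inj[OF form_sum_closed[OF closed_form_of[OF x] closed_form_of[OF y] d12] closed_zero_form e])
  then have "?T1 = zero_form \<and> ?T2 = zero_form" by (rule form_sum_eq_zero_form[OF closed_form_of[OF x] closed_form_of[OF y]])
  then show ?thesis using assoc_op_form_of[OF x] assoc_op_form_of[OF y] assoc_op_zero_form by metis
qed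

lemma sa_oplus_SA:
  assumes x: "x \<in> SA sc ip" and y: "y \<in> SA sc ip" and s: "sa_oplus sc ip x y = Some w"
  shows "w \<in> SA sc ip"
proof -
  have d: "form_oplus_defined ip (form_of sc ip x) (form_of sc ip y)"
    and w: "w = assoc_op sc ip (form_sum (form_of sc ip x) (form_of sc ip y))"
    using s unfolding sa_oplus_def by (auto split: if_splits)
  show ?thesis unfolding SA_def w
    using assoc_op_pos_sa[OF form_sum_closed[OF closed_form_of[OF x] closed_form_of[OF y] d]] by simp
qed

lemma sa_oplus_assoc:
  assumes x: "x \<in> SA sc ip" and y: "y \<in> SA sc ip" and u: "u \<in> SA sc ip"
  shows "Option.bind (sa_oplus sc ip x y) (\<lambda>v. sa_oplus sc ip v u) =
    Option.bind (sa_oplus sc ip y u) (\<lambda>v. sa_oplus sc ip x v)"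
proof -
  have "Option.bind (sa_oplus sc ip y u) (\<lambda>v. sa_oplus sc ip x v) =
    Option.bind (sa_oplus sc ip y u) (\<lambda>v. sa_oplus sc ip v x)"
    by (simp add: sa_oplus_commute)
  also have "\<dots> = (if form_oplus_defined ip (form_of sc ip y) (form_of sc ip u) \<and>
        form_oplus_defined ip (form_of sc ip x) (form_sum (form_of sc ip y) (form_of sc ip u))
     then Some (assoc_op sc ip (form_sum (form_of sc ip x) (form_sum (form_of sc ip y) (form_of sc ip u))))
     else None)"
    unfolding sa_oplus_bind[OF y u x] form_oplus_defined_commute[of ip _ "form_of sc ip x"]
      form_sum_commute[of _ "form_of sc ip x"] ..
  finally show ?thesis
    unfolding sa_oplus_bind[OF x y u] form_sum_assoc
      form_oplus_defined_assoc[OF closed_form_of[OF x] closed_form_of[OF y] closed_form_of[OF u]]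
    by simp
qed

lemma sa_oplus_zero_op: "x \<in> SA sc ip \<Longrightarrow> sa_oplus sc ip x zero_op = Some x"
  using bounded_zero_form[of ip] form_sum_zero_form[OF closed_form_of] assoc_op_form_of
  unfolding sa_oplus_def form_of_zero_op form_oplus_defined_def by simp

lemma sa_oplus_cancel:
  assumes x: "x \<in> SA sc ip" and y: "y \<in> SA sc ip" and w: "w \<in> SA sc ip"
    and h: "sa_oplus sc ip x y \<noteq> None" "sa_oplus sc ip x y = sa_oplus sc ip x w"
  shows "y = w"
proof -
  let ?T1 = "form_of sc ip x" and ?T2 = "form_of sc ip y" and ?T3 = "form_of sc ip w"
  have d12: "form_oplus_defined ip ?T1 ?T2" using h unfolding sa_oplus_def by (auto split: if_splits)
  have d13: "form_oplus_defined ip ?T1 ?T3" using h d12 unfolding sa_oplus_def by (auto split: if_splits)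
  have "assoc_op sc ip (form_sum ?T1 ?T2) = assoc_op sc ip (form_sum ?T1 ?T3)"
    using h d12 d13 unfolding sa_oplus_def by simp
  then have "form_sum ?T1 ?T2 = form_sum ?T1 ?T3"
    by (rule assoc_op_inj[OF form_sum_closed[OF closed_form_of[OF x] closed_form_of[OF y] d12]
          form_sum_closed[OF closed_form_of[OF x] closed_form_of[OF w] d13]])
  then have "?T2 = ?T3" by (rule form_sum_cancel[OF closed_form_of[OF x] closed_form_of[OF y] closed_form_of[OF w] d12 d13])
  then show "y = w" using assoc_op_form_of[OF y] assoc_op_form_of[OF w] by metis
qed

end

theorem proposition4p17:
  fixes sc :: "complex \<Rightarrow> 'h::ab_group_add \<Rightarrow> 'h"
    and ip :: "'h \<Rightarrow> 'h \<Rightarrow> complex"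
  assumes "complex_hilbert_space sc ip"
    and "infinite_dimensional sc"
  shows "gen_effect_algebra (SA sc ip) (sa_oplus sc ip) zero_op"
proof -
  have "\<exists>x::'h. x \<noteq> 0"
    using assms(2) unfolding infinite_dimensional_def by (metis empty_iff finite.emptyI sum.empty)
  then interpret complex_hilbert sc ip by unfold_locales (rule assms(1))
  show ?thesis
    unfolding gen_effect_algebra_def
  proof (intro conjI ballI allI impI)
    show "zero_op \<in> SA sc ip" using pos_sa_zero_op by (simp add: SA_def)
    show "y = w" if "x \<in> SA sc ip" "y \<in> SA sc ip" "w \<in> SA sc ip"
      and "sa_oplus sc ip x y \<noteq> None \<and> sa_oplus sc ip x y = sa_oplus sc ip x w" for x y w
      using sa_oplus_cancel that by blast
  qed (auto intro: sa_oplus_SA sa_oplus_commute sa_oplus_assoc sa_oplus_zero_op dest: sa_oplus_eq_zero_op)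
qed

end
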